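(* Let $\mathbb{T}$ be a geometric theory over $\Sigma$ with enough $\mathbb{S}$-indexed models. The functor $\mathcal{M}:\mathcal{C}_{\mathbb{T}}\to\mathrm{Sh}_{I_{\mathbb{T}}}(M_{\mathbb{T}})$, sending $\{\mathbf{x}\mid\phi\}$ to the equivariant sheaf $([\![\mathbf{x}\mid\phi]\!]\xrightarrow{\pi_1}M_{\mathbb{T}},\theta)$ and each arrow to the induced map, is full.
   Context: $\Sigma$ is a single-sorted first-order signature with equality, $\kappa\geq|\Sigma|+\aleph_0$ an infinite cardinal, $\mathbb{S}$ a fixed set of cardinality at least $\kappa$. $M_{\mathbb{T}}$ is the set of $\mathbb{T}$-models whose underlying set is a quotient of a subset of $\mathbb{S}$ (elements $[a]$), $I_{\mathbb{T}}$ the set of isomorphisms between them, with domain/codomain $d,c$. Topologies: $M_{\mathbb{T}}$ has the coarsest topology containing $\{\mathbf{M}:[a]\in\mathbf{M}\}$, $\{\mathbf{M}:[\mathbf{a}]\in R^{\mathbf{M}}\}$ (relation symbols incl.\ equality), $\{\mathbf{M}:f^{\mathbf{M}}([\mathbf{a}])=[b]\}$ (function symbols); $I_{\mathbb{T}}$ the coarsest making $d,c$ continuous and containing $\{\mathbf{f}:[a]\in d(\mathbf{f}),[b]\in c(\mathbf{f}),\mathbf{f}([a])=[b]\}$. $\mathbb{T}$ has enough $\mathbb{S}$-indexed models if every geometric sequent true in all of $M_{\mathbb{T}}$ is provable. $\mathcal{C}_{\mathbb{T}}$ is the syntactic category of $\mathbb{T}$. $[\![\mathbf{x}\mid\phi]\!]=\{(\mathbf{M},[\mathbf{a}]):\mathbf{M}\in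 M_{\mathbb{T}},[\mathbf{a}]\in\phi^{\mathbf{M}}\}$ carries the coarsest topology making the projection $\pi_1$ continuous and such that for every tuple $\mathbf{a}$ the image of $\mathbf{M}\mapsto(\mathbf{M},[\mathbf{a}])$ on $\{\mathbf{M}:[\mathbf{a}]\in\phi^{\mathbf{M}}\}$ is open; $\theta(\mathbf{f}:\mathbf{M}\to\mathbf{N},(\mathbf{M},[\mathbf{a}]))=(\mathbf{N},\mathbf{f}([\mathbf{a}]))$. $\mathrm{Sh}_{I_{\mathbb{T}}}(M_{\mathbb{T}})$ is the topos of equivariant sheaves on $I_{\mathbb{T}}\rightrightarrows M_{\mathbb{T}}$. *)

theory Defs
  imports "HOL-Analysis.Abstract_Topology"
begin

text \<open>Signature: function symbols of type 'f with arities af, relation symbols of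
type 'r with arities ar; equality is built in.\<close>

datatype 'f trm = Var nat | Fun 'f "'f trm list"

datatype ('f, 'r, 'd) fm =
    Rel 'r "'f trm list"
  | Eq "'f trm" "'f trm"
  | Top
  | Conj "('f, 'r, 'd) fm" "('f, 'r, 'd) fm"
  | Disj "'d set" "'d \<Rightarrow> ('f, 'r, 'd) fm"
  | Exi nat "('f, 'r, 'd) fm"

primrec FVt :: "'f trm \<Rightarrow> nat set" where
  "FVt (Var v) = {v}"
| "FVt (Fun f ts) = \<Union>(set (map FVt ts))"

primrec wft :: "('f \<Rightarrow> nat) \<Rightarrow> 'f trm \<Rightarrow> bool" where
  "wft af (Var v) = True"
| "wft af (Fun f ts) = (length ts = af f \<and> list_all id (map (wft af) ts))"

primrec FV :: "('f, 'r, 'd) fm \<Rightarrow> nat set" where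
  "FV (Rel r ts) = (\<Union>t\<in>set ts. FVt t)"
| "FV (Eq s t) = FVt s \<union> FVt t"
| "FV Top = {}"
| "FV (Conj \<phi> \<psi>) = FV \<phi> \<union> FV \<psi>"
| "FV (Disj I F) = (\<Union>i\<in>I. FV (F i))"
| "FV (Exi v \<phi>) = FV \<phi> - {v}"

primrec wff :: "('f \<Rightarrow> nat) \<Rightarrow> ('r \<Rightarrow> nat) \<Rightarrow> ('f, 'r, 'd) fm \<Rightarrow> bool" where
  "wff af ar (Rel r ts) = (length ts = ar r \<and> (\<forall>t\<in>set ts. wft af t))"
| "wff af ar (Eq s t) = (wft af s \<and> wft af t)"
| "wff af ar Top = True"
| "wff af ar (Conj \<phi> \<psi>) = (wff af ar \<phi> \<and> wff af ar \<psi>)"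
| "wff af ar (Disj I F) = (\<forall>i\<in>I. wff af ar (F i))"
| "wff af ar (Exi v \<phi>) = wff af ar \<phi>"

primrec substt :: "(nat \<Rightarrow> 'f trm) \<Rightarrow> 'f trm \<Rightarrow> 'f trm" where
  "substt \<sigma> (Var v) = \<sigma> v"
| "substt \<sigma> (Fun f ts) = Fun f (map (substt \<sigma>) ts)"

text \<open>Substitution of terms for the free variables (capture is excluded by the side
condition freefor in the deduction rules).\<close>

primrec subst :: "('f, 'r, 'd) fm \<Rightarrow> (nat \<Rightarrow> 'f trm) \<Rightarrow> ('f, 'r, 'd) fm" where
  "subst (Rel r ts) \<sigma> = Rel r (map (substt \<sigma>) ts)"
| "subst (Eq s t) \<sigma> = Eq (substt \<sigma> s) (substt \<sigma> t)"
| "subst Top \<sigma> = Top"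
| "subst (Conj \<phi> \<psi>) \<sigma> = Conj (subst \<phi> \<sigma>) (subst \<psi> \<sigma>)"
| "subst (Disj I F) \<sigma> = Disj I (\<lambda>i. subst (F i) \<sigma>)"
| "subst (Exi v \<phi>) \<sigma> = Exi v (subst \<phi> (\<sigma>(v := Var v)))"

primrec freefor :: "('f, 'r, 'd) fm \<Rightarrow> (nat \<Rightarrow> 'f trm) \<Rightarrow> bool" where
  "freefor (Rel r ts) \<sigma> = True"
| "freefor (Eq s t) \<sigma> = True"
| "freefor Top \<sigma> = True"
| "freefor (Conj \<phi> \<psi>) \<sigma> = (freefor \<phi> \<sigma> \<and> freefor \<psi> \<sigma>)"
| "freefor (Disj I F) \<sigma> = (\<forall>i\<in>I. freefor (F i) \<sigma>)"
| "freefor (Exi v \<phi>) \<sigma> =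
     ((\<forall>u\<in>FV \<phi> - {v}. v \<notin> FVt (\<sigma> u)) \<and> freefor \<phi> (\<sigma>(v := Var v)))"

fun exs :: "nat list \<Rightarrow> ('f, 'r, 'd) fm \<Rightarrow> ('f, 'r, 'd) fm" where
  "exs [] \<phi> = \<phi>"
| "exs (y # ys) \<phi> = Exi y (exs ys \<phi>)"

fun eqs :: "(nat \<times> nat) list \<Rightarrow> ('f, 'r, 'd) fm" where
  "eqs [] = Top"
| "eqs ((u, w) # ps) = Conj (Eq (Var u) (Var w)) (eqs ps)"

definition ren :: "nat list \<Rightarrow> nat list \<Rightarrow> nat \<Rightarrow> 'f trm" where
  "ren u w v = (case map_of (zip u w) v of Some w' \<Rightarrow> Var w' | None \<Rightarrow> Var v)"

text \<open>A sequent  phi |-_x psi  is represented by (x, phi, psi).\<close>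
definition seq_ok :: "('f \<Rightarrow> nat) \<Rightarrow> ('r \<Rightarrow> nat) \<Rightarrow> nat list \<Rightarrow> ('f, 'r, 'd) fm \<Rightarrow> ('f, 'r, 'd) fm \<Rightarrow> bool" where
  "seq_ok af ar x \<phi> \<psi> \<longleftrightarrow> distinct x \<and> wff af ar \<phi> \<and> wff af ar \<psi> \<and> FV \<phi> \<subseteq> set x \<and> FV \<psi> \<subseteq> set x"

definition geometric_theory ::
  "('f \<Rightarrow> nat) \<Rightarrow> ('r \<Rightarrow> nat) \<Rightarrow> (nat list \<times> ('f, 'r, 'd) fm \<times> ('f, 'r, 'd) fm) set \<Rightarrow> bool" where
  "geometric_theory af ar T \<longleftrightarrow> (\<forall>(x, \<phi>, \<psi>) \<in> T. seq_ok af ar x \<phi> \<psi>)"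

section \<open>Deduction system of geometric logic (Johnstone, Elephant D1.3.1)\<close>

inductive prv :: "('f \<Rightarrow> nat) \<Rightarrow> ('r \<Rightarrow> nat) \<Rightarrow> (nat list \<times> ('f, 'r, 'd) fm \<times> ('f, 'r, 'd) fm) set
    \<Rightarrow> nat list \<Rightarrow> ('f, 'r, 'd) fm \<Rightarrow> ('f, 'r, 'd) fm \<Rightarrow> bool"
  for af ar T where
  axiom: "(x, \<phi>, \<psi>) \<in> T \<Longrightarrow> seq_ok af ar x \<phi> \<psi> \<Longrightarrow> prv af ar T x \<phi> \<psi>"
| ident: "seq_ok af ar x \<phi> \<phi> \<Longrightarrow> prv af ar T x \<phi> \<phi>"
| cut: "prv af ar T x \<phi> \<psi> \<Longrightarrow> prv af ar T x \<psi> \<chi> \<Longrightarrow> prv af ar T x \<phi> \<chi>"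
| substitution: "prv af ar T x \<phi> \<psi> \<Longrightarrow> distinct y \<Longrightarrow>
     (\<forall>v\<in>set x. wft af (\<sigma> v) \<and> FVt (\<sigma> v) \<subseteq> set y) \<Longrightarrow> freefor \<phi> \<sigma> \<Longrightarrow> freefor \<psi> \<sigma> \<Longrightarrow>
     prv af ar T y (subst \<phi> \<sigma>) (subst \<psi> \<sigma>)"
| eq_refl: "distinct x \<Longrightarrow> v \<in> set x \<Longrightarrow> prv af ar T x Top (Eq (Var v) (Var v))"
| eq_subst: "distinct u \<Longrightarrow> length u = length w \<Longrightarrow> freefor \<phi> (ren u w) \<Longrightarrow>
     seq_ok af ar z (Conj (eqs (zip u w)) \<phi>) (subst \<phi> (ren u w)) \<Longrightarrow>
     prv af ar T z (Conj (eqs (zip u w)) \<phi>) (subst \<phi> (ren u w))"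
| top_intro: "seq_ok af ar x \<phi> Top \<Longrightarrow> prv af ar T x \<phi> Top"
| conj_elim1: "seq_ok af ar x (Conj \<phi> \<psi>) \<phi> \<Longrightarrow> prv af ar T x (Conj \<phi> \<psi>) \<phi>"
| conj_elim2: "seq_ok af ar x (Conj \<phi> \<psi>) \<psi> \<Longrightarrow> prv af ar T x (Conj \<phi> \<psi>) \<psi>"
| conj_intro: "prv af ar T x \<phi> \<psi> \<Longrightarrow> prv af ar T x \<phi> \<chi> \<Longrightarrow> prv af ar T x \<phi> (Conj \<psi> \<chi>)"
| disj_intro: "i \<in> I \<Longrightarrow> seq_ok af ar x (F i) (Disj I F) \<Longrightarrow> prv af ar T x (F i) (Disj I F)"
| disj_elim: "(\<forall>i\<in>I. prv af ar T x (F i) \<psi>) \<Longrightarrow> seq_ok af ar x (Disj I F) \<psi> \<Longrightarrow>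
     prv af ar T x (Disj I F) \<psi>"
| ex_elim: "prv af ar T (x @ [y]) \<phi> \<psi> \<Longrightarrow> y \<notin> set x \<Longrightarrow> seq_ok af ar x (Exi y \<phi>) \<psi> \<Longrightarrow>
     prv af ar T x (Exi y \<phi>) \<psi>"
| ex_intro: "prv af ar T x (Exi y \<phi>) \<psi> \<Longrightarrow> y \<notin> set x \<Longrightarrow> prv af ar T (x @ [y]) \<phi> \<psi>"
| distributive: "seq_ok af ar x (Conj \<phi> (Disj I F)) (Disj I (\<lambda>i. Conj \<phi> (F i))) \<Longrightarrow>
     prv af ar T x (Conj \<phi> (Disj I F)) (Disj I (\<lambda>i. Conj \<phi> (F i)))"
| frobenius: "y \<notin> set x \<Longrightarrow> seq_ok af ar x (Conj \<phi> (Exi y \<psi>)) (Exi y (Conj \<phi> \<psi>)) \<Longrightarrow>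
     prv af ar T x (Conj \<phi> (Exi y \<psi>)) (Exi y (Conj \<phi> \<psi>))"

text \<open>An element [a] of such a structure is an equivalence class, i.e. a subset of S;
the carrier is a partition of a subset of S.  Operations are normalised outside
their domain so that structures are determined by their data.\<close>

record ('f, 'r, 's) str =
  carr :: "'s set set"
  fn :: "'f \<Rightarrow> 's set list \<Rightarrow> 's set"
  rl :: "'r \<Rightarrow> 's set list \<Rightarrow> bool"

definition is_str :: "('f \<Rightarrow> nat) \<Rightarrow> ('r \<Rightarrow> nat) \<Rightarrow> 's set \<Rightarrow> ('f, 'r, 's) str \<Rightarrow> bool" where
  "is_str af ar S M \<longleftrightarrow>
     (\<forall>c\<in>carr M. c \<noteq> {} \<and> c \<subseteq> S) \<and> pairwise disjnt (carr M) \<and>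
     (\<forall>f xs. if length xs = af f \<and> set xs \<subseteq> carr M then fn M f xs \<in> carr M else fn M f xs = {}) \<and>
     (\<forall>r xs. rl M r xs \<longrightarrow> length xs = ar r \<and> set xs \<subseteq> carr M)"

primrec evalt :: "('f, 'r, 's) str \<Rightarrow> (nat \<Rightarrow> 's set) \<Rightarrow> 'f trm \<Rightarrow> 's set" where
  "evalt M \<rho> (Var v) = \<rho> v"
| "evalt M \<rho> (Fun f ts) = fn M f (map (evalt M \<rho>) ts)"

primrec sat :: "('f, 'r, 's) str \<Rightarrow> (nat \<Rightarrow> 's set) \<Rightarrow> ('f, 'r, 'd) fm \<Rightarrow> bool" where
  "sat M \<rho> (Rel r ts) = rl M r (map (evalt M \<rho>) ts)"
| "sat M \<rho> (Eq s t) = (evalt M \<rho> s = evalt M \<rho> t)"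
| "sat M \<rho> Top = True"
| "sat M \<rho> (Conj \<phi> \<psi>) = (sat M \<rho> \<phi> \<and> sat M \<rho> \<psi>)"
| "sat M \<rho> (Disj I F) = (\<exists>i\<in>I. sat M \<rho> (F i))"
| "sat M \<rho> (Exi v \<phi>) = (\<exists>a\<in>carr M. sat M (\<rho>(v := a)) \<phi>)"

definition val :: "nat list \<Rightarrow> 's set list \<Rightarrow> nat \<Rightarrow> 's set" where
  "val x as v = (case map_of (zip x as) v of Some a \<Rightarrow> a | None \<Rightarrow> {})"

definition interp :: "('f, 'r, 's) str \<Rightarrow> nat list \<Rightarrow> ('f, 'r, 'd) fm \<Rightarrow> 's set list set" where
  "interp M x \<phi> = {as. length as = length x \<and> set as \<subseteq> carr M \<and> sat M (val x as) \<phi>}"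

definition valid_in :: "('f, 'r, 's) str \<Rightarrow> nat list \<Rightarrow> ('f, 'r, 'd) fm \<Rightarrow> ('f, 'r, 'd) fm \<Rightarrow> bool" where
  "valid_in M x \<phi> \<psi> \<longleftrightarrow> interp M x \<phi> \<subseteq> interp M x \<psi>"

definition MT :: "('f \<Rightarrow> nat) \<Rightarrow> ('r \<Rightarrow> nat) \<Rightarrow> 's set
    \<Rightarrow> (nat list \<times> ('f, 'r, 'd) fm \<times> ('f, 'r, 'd) fm) set \<Rightarrow> ('f, 'r, 's) str set" where
  "MT af ar S T = {M. is_str af ar S M \<and> (\<forall>(x, \<phi>, \<psi>) \<in> T. valid_in M x \<phi> \<psi>)}"

definition enough_models :: "('f \<Rightarrow> nat) \<Rightarrow> ('r \<Rightarrow> nat) \<Rightarrow> 's set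
    \<Rightarrow> (nat list \<times> ('f, 'r, 'd) fm \<times> ('f, 'r, 'd) fm) set \<Rightarrow> bool" where
  "enough_models af ar S T \<longleftrightarrow>
     (\<forall>x \<phi> \<psi>. seq_ok af ar x \<phi> \<psi> \<longrightarrow> (\<forall>M\<in>MT af ar S T. valid_in M x \<phi> \<psi>) \<longrightarrow> prv af ar T x \<phi> \<psi>)"

text \<open>[a]: the class of a in M (meaningful when a lies in the union of the carrier).\<close>
definition cls :: "('f, 'r, 's) str \<Rightarrow> 's \<Rightarrow> 's set" where
  "cls M a = (THE c. c \<in> carr M \<and> a \<in> c)"

definition inM :: "('f, 'r, 's) str \<Rightarrow> 's \<Rightarrow> bool" where
  "inM M a \<longleftrightarrow> a \<in> \<Union>(carr M)"

section \<open>The topological groupoid I_T \<rightrightarrows> M_T\<close>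

definition MT_subbasis :: "('f \<Rightarrow> nat) \<Rightarrow> ('r \<Rightarrow> nat) \<Rightarrow> 's set
    \<Rightarrow> (nat list \<times> ('f, 'r, 'd) fm \<times> ('f, 'r, 'd) fm) set \<Rightarrow> ('f, 'r, 's) str set set" where
  "MT_subbasis af ar S T =
     {{M \<in> MT af ar S T. inM M a} | a. a \<in> S}
   \<union> {{M \<in> MT af ar S T. (\<forall>a\<in>set as. inM M a) \<and> rl M r (map (cls M) as)} | r as. set as \<subseteq> S}
   \<union> {{M \<in> MT af ar S T. inM M a \<and> inM M b \<and> cls M a = cls M b} | a b. a \<in> S \<and> b \<in> S}
   \<union> {{M \<in> MT af ar S T. (\<forall>a\<in>set as. inM M a) \<and> inM M b \<and> fn M f (map (cls M) as) = cls M b}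
        | f as b. set as \<subseteq> S \<and> b \<in> S}"

definition coarsest_top :: "'a set \<Rightarrow> 'a set set \<Rightarrow> 'a topology" where
  "coarsest_top X B = topology_generated_by (insert X {U \<inter> X | U. U \<in> B})"

definition MT_top :: "('f \<Rightarrow> nat) \<Rightarrow> ('r \<Rightarrow> nat) \<Rightarrow> 's set
    \<Rightarrow> (nat list \<times> ('f, 'r, 'd) fm \<times> ('f, 'r, 'd) fm) set \<Rightarrow> ('f, 'r, 's) str topology" where
  "MT_top af ar S T = coarsest_top (MT af ar S T) (MT_subbasis af ar S T)"

text \<open>An isomorphism f : M \<rightarrow> N is represented by the triple (M, N, h); h is normalised
to {} outside the carrier of M.\<close>
type_synonym ('f, 'r, 's) iso = "('f, 'r, 's) str \<times> ('f, 'r, 's) str \<times> ('s set \<Rightarrow> 's set)"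

definition IT :: "('f \<Rightarrow> nat) \<Rightarrow> ('r \<Rightarrow> nat) \<Rightarrow> 's set
    \<Rightarrow> (nat list \<times> ('f, 'r, 'd) fm \<times> ('f, 'r, 'd) fm) set \<Rightarrow> ('f, 'r, 's) iso set" where
  "IT af ar S T = {(M, N, h). M \<in> MT af ar S T \<and> N \<in> MT af ar S T \<and>
      bij_betw h (carr M) (carr N) \<and> (\<forall>c. c \<notin> carr M \<longrightarrow> h c = {}) \<and>
      (\<forall>f xs. length xs = af f \<and> set xs \<subseteq> carr M \<longrightarrow> h (fn M f xs) = fn N f (map h xs)) \<and>
      (\<forall>r xs. length xs = ar r \<and> set xs \<subseteq> carr M \<longrightarrow> (rl N r (map h xs) \<longleftrightarrow> rl M r xs))}"

definition isod :: "('f, 'r, 's) iso \<Rightarrow> ('f, 'r, 's) str" where "isod i = fst i"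
definition isoc :: "('f, 'r, 's) iso \<Rightarrow> ('f, 'r, 's) str" where "isoc i = fst (snd i)"
definition isofun :: "('f, 'r, 's) iso \<Rightarrow> 's set \<Rightarrow> 's set" where "isofun i = snd (snd i)"

definition IT_top :: "('f \<Rightarrow> nat) \<Rightarrow> ('r \<Rightarrow> nat) \<Rightarrow> 's set
    \<Rightarrow> (nat list \<times> ('f, 'r, 'd) fm \<times> ('f, 'r, 'd) fm) set \<Rightarrow> ('f, 'r, 's) iso topology" where
  "IT_top af ar S T = coarsest_top (IT af ar S T)
     ({{i \<in> IT af ar S T. isod i \<in> U} | U. openin (MT_top af ar S T) U}
    \<union> {{i \<in> IT af ar S T. isoc i \<in> U} | U. openin (MT_top af ar S T) U}
    \<union> {{i \<in> IT af ar S T. inM (isod i) a \<and> inM (isoc i) b \<and> isofun i (cls (isod i) a) = cls (isoc i) b}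
        | a b. a \<in> S \<and> b \<in> S})"

section \<open>The equivariant sheaf M{x | phi}\<close>

definition extn :: "('f \<Rightarrow> nat) \<Rightarrow> ('r \<Rightarrow> nat) \<Rightarrow> 's set
    \<Rightarrow> (nat list \<times> ('f, 'r, 'd) fm \<times> ('f, 'r, 'd) fm) set
    \<Rightarrow> nat list \<Rightarrow> ('f, 'r, 'd) fm \<Rightarrow> (('f, 'r, 's) str \<times> 's set list) set" where
  "extn af ar S T x \<phi> = {(M, as). M \<in> MT af ar S T \<and> as \<in> interp M x \<phi>}"

definition ext_top :: "('f \<Rightarrow> nat) \<Rightarrow> ('r \<Rightarrow> nat) \<Rightarrow> 's set
    \<Rightarrow> (nat list \<times> ('f, 'r, 'd) fm \<times> ('f, 'r, 'd) fm) set
    \<Rightarrow> nat list \<Rightarrow> ('f, 'r, 'd) fm \<Rightarrow> (('f, 'r, 's) str \<times> 's set list) topology" where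
  "ext_top af ar S T x \<phi> = coarsest_top (extn af ar S T x \<phi>)
     ({{e \<in> extn af ar S T x \<phi>. fst e \<in> U} | U. openin (MT_top af ar S T) U}
    \<union> {{(M, map (cls M) as) | M. M \<in> MT af ar S T \<and> (\<forall>a\<in>set as. inM M a) \<and>
           map (cls M) as \<in> interp M x \<phi>} | as. set as \<subseteq> S})"

definition act :: "('f, 'r, 's) iso \<Rightarrow> ('f, 'r, 's) str \<times> 's set list \<Rightarrow> ('f, 'r, 's) str \<times> 's set list" where
  "act i e = (isoc i, map (isofun i) (snd e))"

definition eqsh_mor :: "('f \<Rightarrow> nat) \<Rightarrow> ('r \<Rightarrow> nat) \<Rightarrow> 's set
    \<Rightarrow> (nat list \<times> ('f, 'r, 'd) fm \<times> ('f, 'r, 'd) fm) set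
    \<Rightarrow> nat list \<Rightarrow> ('f, 'r, 'd) fm \<Rightarrow> nat list \<Rightarrow> ('f, 'r, 'd) fm
    \<Rightarrow> (('f, 'r, 's) str \<times> 's set list \<Rightarrow> ('f, 'r, 's) str \<times> 's set list) \<Rightarrow> bool" where
  "eqsh_mor af ar S T x \<phi> y \<psi> g \<longleftrightarrow>
     continuous_map (ext_top af ar S T x \<phi>) (ext_top af ar S T y \<psi>) g \<and>
     (\<forall>e\<in>extn af ar S T x \<phi>. fst (g e) = fst e) \<and>
     (\<forall>i\<in>IT af ar S T. \<forall>e\<in>extn af ar S T x \<phi>. fst e = isod i \<longrightarrow> g (act i e) = act i (g e))"

text \<open>theta (in context x @ y, x and y disjoint) is T-provably functional from
{x | phi} to {y | psi} (Johnstone D1.4.1).\<close>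
definition prov_functional :: "('f \<Rightarrow> nat) \<Rightarrow> ('r \<Rightarrow> nat)
    \<Rightarrow> (nat list \<times> ('f, 'r, 'd) fm \<times> ('f, 'r, 'd) fm) set
    \<Rightarrow> nat list \<Rightarrow> ('f, 'r, 'd) fm \<Rightarrow> nat list \<Rightarrow> ('f, 'r, 'd) fm \<Rightarrow> ('f, 'r, 'd) fm \<Rightarrow> bool" where
  "prov_functional af ar T x \<phi> y \<psi> \<theta> \<longleftrightarrow>
     wff af ar \<theta> \<and> FV \<theta> \<subseteq> set (x @ y) \<and>
     prv af ar T (x @ y) \<theta> (Conj \<phi> \<psi>) \<and>
     prv af ar T x \<phi> (exs y \<theta>) \<and>
     (\<exists>z. length z = length y \<and> distinct z \<and> set z \<inter> set (x @ y) = {} \<and>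
          freefor \<theta> (ren y z) \<and>
          prv af ar T (x @ y @ z) (Conj \<theta> (subst \<theta> (ren y z))) (eqs (zip y z)))"

definition induced_map :: "nat list \<Rightarrow> nat list \<Rightarrow> ('f, 'r, 'd) fm
    \<Rightarrow> ('f, 'r, 's) str \<times> 's set list \<Rightarrow> ('f, 'r, 's) str \<times> 's set list" where
  "induced_map x y \<theta> e = (fst e, THE bs. snd e @ bs \<in> interp (fst e) (x @ y) \<theta>)"

end

theory Submission
  imports Defs
begin

text \<open>Let \<open>g\<close> be a morphism of equivariant sheaves from \<open>[[x | \<phi>]]\<close> to \<open>[[y | \<psi>]]\<close>.  Call a
finite \<^emph>\<open>diagram\<close> a finite list of atomic facts about elements of \<open>\<bbbS>\<close> together with
representatives of an input tuple and of an output tuple; it \<^emph>\<open>forces\<close> \<open>g\<close> if \<open>g\<close> sends the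
input to the output in every model where the facts hold.  Read with fresh variables for the
elements of \<open>\<bbbS>\<close>, a diagram is a geometric formula in context \<open>x @ y\<close>, and
\<open>\<theta> = \<phi> \<and> \<Or>{forcing diagrams}\<close> defines the graph of \<open>g\<close> in every model: continuity of \<open>g\<close>
puts each point of the graph into a basic open set, i.e. a forcing diagram, while equivariance
lets us transport a model along an isomorphism until the variables of a satisfied diagram are
literally interpreted by the classes of the corresponding elements of \<open>\<bbbS>\<close>.  There are at
most \<open>|\<bbbS>|\<close> diagrams, so the disjunction exists.  Hence the sequents saying that \<open>\<theta>\<close> is
provably functional hold in all \<open>\<bbbS>\<close>-indexed models and are provable because there are
enough of them, and \<open>g\<close> is the map induced by \<open>\<theta>\<close>.\<close>

unbundle cardinal_syntax

definition val_upd :: "(nat \<Rightarrow> 's set) \<Rightarrow> nat list \<Rightarrow> 's set list \<Rightarrow> nat \<Rightarrow> 's set" where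
  "val_upd \<rho> ws ds v = (case map_of (zip ws ds) v of Some d \<Rightarrow> d | None \<Rightarrow> \<rho> v)"

lemma val_upd_Cons: "val_upd \<rho> (w # ws) (d # ds) = (val_upd \<rho> ws ds)(w := d)"
  by (auto simp: val_upd_def fun_eq_iff)

lemma val_upd_nth:
  "distinct ws \<Longrightarrow> length ws = length ds \<Longrightarrow> i < length ws \<Longrightarrow> val_upd \<rho> ws ds (ws ! i) = ds ! i"
  by (simp add: val_upd_def map_of_zip_nth)

lemma val_upd_notin: "v \<notin> set ws \<Longrightarrow> val_upd \<rho> ws ds v = \<rho> v"
proof -
  assume "v \<notin> set ws"
  then have "map_of (zip ws ds) v = None"
    by (auto simp: map_of_eq_None_iff dest: set_zip_leftD)
  then show ?thesis by (simp add: val_upd_def)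
qed

lemma val_upd_fun_upd: "w \<notin> set ws \<Longrightarrow> val_upd (\<rho>(w := a)) ws ds = (val_upd \<rho> ws ds)(w := a)"
proof (rule ext)
  fix v assume w: "w \<notin> set ws"
  show "val_upd (\<rho>(w := a)) ws ds v = ((val_upd \<rho> ws ds)(w := a)) v"
  proof (cases "v = w")
    case True then show ?thesis using val_upd_notin[OF w, of "\<rho>(w := a)" ds] by simp
  next
    case False then show ?thesis by (simp add: val_upd_def split: option.splits)
  qed
qed

lemma val_nth: "distinct x \<Longrightarrow> length as = length x \<Longrightarrow> i < length x \<Longrightarrow> val x as (x ! i) = as ! i"
  by (simp add: val_def map_of_zip_nth)

lemma val_append_nth_left:
  assumes "distinct (x @ y)" "length as = length x" "length bs = length y" "i < length x"
  shows "val (x @ y) (as @ bs) (x ! i) = as ! i"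
  using val_nth[of "x @ y" "as @ bs" i] assms by (simp add: nth_append)

lemma val_append_nth_right:
  assumes "distinct (x @ y)" "length as = length x" "length bs = length y" "i < length y"
  shows "val (x @ y) (as @ bs) (y ! i) = bs ! i"
  using val_nth[of "x @ y" "as @ bs" "length x + i"] assms by (simp add: nth_append)

lemma val_append_left:
  assumes "distinct (x @ y)" "length as = length x" "length bs = length y" "v \<in> set x"
  shows "val (x @ y) (as @ bs) v = val x as v"
  using assms val_append_nth_left[OF assms(1-3)] val_nth[of x as] by (auto simp: in_set_conv_nth)

lemma val_append_right:
  assumes "distinct (x @ y)" "length as = length x" "length bs = length y" "v \<in> set y"
  shows "val (x @ y) (as @ bs) v = val y bs v"
  using assms val_append_nth_right[OF assms(1-3)] val_nth[of y bs] by (auto simp: in_set_conv_nth)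

lemma val_map: "h {} = {} \<Longrightarrow> val x (map h as) = (\<lambda>v. h (val x as v))"
  by (auto simp: val_def fun_eq_iff zip_map2 map_of_map split: option.splits)

lemma val_in_carr: "set as \<subseteq> carr M \<Longrightarrow> val x as v \<in> insert {} (carr M)"
  by (auto simp: val_def split: option.splits dest!: map_of_SomeD set_zip_rightD)

lemma interp_append_split:
  assumes "zs \<in> interp N (l1 @ l2) \<chi>"
  obtains as bs where "zs = as @ bs" "length as = length l1" "length bs = length l2"
    "set as \<subseteq> carr N" "set bs \<subseteq> carr N" "sat N (val (l1 @ l2) (as @ bs)) \<chi>"
proof -
  have "set (take (length l1) zs) \<subseteq> carr N" "set (drop (length l1) zs) \<subseteq> carr N"
    using assms set_take_subset set_drop_subset by (fastforce simp: interp_def)+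
  then show ?thesis using assms that[of "take (length l1) zs" "drop (length l1) zs"]
    by (simp add: interp_def)
qed

lemma evalt_cong: "(\<forall>v\<in>FVt t. \<rho> v = \<rho>' v) \<Longrightarrow> evalt M \<rho> t = evalt M \<rho>' t"
proof (induction t)
  case (Fun f ts)
  then have "map (evalt M \<rho>) ts = map (evalt M \<rho>') ts" by auto
  then show ?case by (metis evalt.simps(2))
qed simp

lemma sat_cong: "(\<forall>v\<in>FV \<phi>. \<rho> v = \<rho>' v) \<Longrightarrow> sat M \<rho> \<phi> = sat M \<rho>' \<phi>"
proof (induction \<phi> arbitrary: \<rho> \<rho>')
  case (Rel r ts)
  then have "map (evalt M \<rho>) ts = map (evalt M \<rho>') ts" by (auto intro!: evalt_cong)
  then show ?case by (metis sat.simps(1))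
next
  case (Eq s t)
  then show ?case using evalt_cong[of s \<rho> \<rho>' M] evalt_cong[of t \<rho> \<rho>' M] by auto
next
  case (Conj \<phi>1 \<phi>2)
  then show ?case by (metis FV.simps(4) Un_iff sat.simps(4))
next
  case (Disj I F)
  then show ?case by simp (metis UN_I rangeI)
next
  case (Exi v \<phi>)
  have "\<And>a. sat M (\<rho>(v := a)) \<phi> = sat M (\<rho>'(v := a)) \<phi>"
    using Exi by (intro Exi.IH) auto
  then show ?case by simp
qed simp

lemma evalt_substt: "evalt M \<rho> (substt \<sigma> t) = evalt M (\<lambda>v. evalt M \<rho> (\<sigma> v)) t"
proof (induction t)
  case (Fun f ts)
  then have "map (evalt M \<rho> \<circ> substt \<sigma>) ts = map (evalt M (\<lambda>v. evalt M \<rho> (\<sigma> v))) ts" by auto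
  then show ?case by (simp del: map_eq_conv)
qed simp

lemma FVt_substt: "FVt (substt \<sigma> t) = (\<Union>u\<in>FVt t. FVt (\<sigma> u))"
  by (induction t) auto

lemma wft_substt: "wft af t \<Longrightarrow> (\<forall>v. wft af (\<sigma> v)) \<Longrightarrow> wft af (substt \<sigma> t)"
  by (induction t) (auto simp: list_all_iff)

lemma sat_subst: "freefor \<phi> \<sigma> \<Longrightarrow> sat M \<rho> (subst \<phi> \<sigma>) = sat M (\<lambda>v. evalt M \<rho> (\<sigma> v)) \<phi>"
proof (induction \<phi> arbitrary: \<sigma> \<rho>)
  case (Exi v \<phi>)
  have "sat M (\<rho>(v := a)) (subst \<phi> (\<sigma>(v := Var v))) = sat M ((\<lambda>u. evalt M \<rho> (\<sigma> u))(v := a)) \<phi>"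
    for a
  proof -
    have "sat M (\<rho>(v := a)) (subst \<phi> (\<sigma>(v := Var v))) =
        sat M (\<lambda>u. evalt M (\<rho>(v := a)) ((\<sigma>(v := Var v)) u)) \<phi>"
      using Exi.prems by (intro Exi.IH) (simp add: fun_upd_def)
    also have "\<dots> = sat M ((\<lambda>u. evalt M \<rho> (\<sigma> u))(v := a)) \<phi>"
    proof (rule sat_cong, intro ballI)
      fix u assume u: "u \<in> FV \<phi>"
      show "evalt M (\<rho>(v := a)) ((\<sigma>(v := Var v)) u) = ((\<lambda>u. evalt M \<rho> (\<sigma> u))(v := a)) u"
      proof (cases "u = v")
        case False
        then have "v \<notin> FVt (\<sigma> u)" using Exi.prems u by auto
        then have "evalt M (\<rho>(v := a)) (\<sigma> u) = evalt M \<rho> (\<sigma> u)" by (intro evalt_cong) auto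
        then show ?thesis using False by simp
      qed simp
    qed
    finally show ?thesis .
  qed
  then show ?case by simp
qed (auto simp: evalt_substt comp_def)

lemma FV_subst: "FV (subst \<phi> \<sigma>) \<subseteq> (\<Union>u\<in>FV \<phi>. FVt (\<sigma> u))"
proof (induction \<phi> arbitrary: \<sigma>)
  case (Exi v \<phi>)
  show ?case
  proof
    fix w assume "w \<in> FV (subst (Exi v \<phi>) \<sigma>)"
    then have w: "w \<in> FV (subst \<phi> (\<sigma>(v := Var v)))" "w \<noteq> v" by auto
    then obtain u where "u \<in> FV \<phi>" "w \<in> FVt ((\<sigma>(v := Var v)) u)" using Exi.IH by blast
    then show "w \<in> (\<Union>u\<in>FV (Exi v \<phi>). FVt (\<sigma> u))" using w by (auto split: if_splits)
  qed
next
  case (Conj a b)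
  then show ?case by (fastforce simp del: UN_simps)
next
  case (Disj I F)
  then show ?case by (fastforce simp del: UN_simps)
qed (auto simp: FVt_substt)

lemma wff_subst: "wff af ar \<phi> \<Longrightarrow> (\<forall>v. wft af (\<sigma> v)) \<Longrightarrow> wff af ar (subst \<phi> \<sigma>)"
  by (induction \<phi> arbitrary: \<sigma>) (auto intro: wft_substt)

lemma sat_exs:
  "distinct ws \<Longrightarrow> sat M \<rho> (exs ws \<phi>) \<longleftrightarrow>
    (\<exists>ds. length ds = length ws \<and> set ds \<subseteq> carr M \<and> sat M (val_upd \<rho> ws ds) \<phi>)"
proof (induction ws arbitrary: \<rho>)
  case Nil
  then show ?case by (simp add: val_upd_def)
next
  case (Cons w ws)
  then have IH: "sat M (\<rho>(w := a)) (exs ws \<phi>) \<longleftrightarrow>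
      (\<exists>ds. length ds = length ws \<and> set ds \<subseteq> carr M \<and> sat M (val_upd \<rho> (w # ws) (a # ds)) \<phi>)"
    for a by (simp add: val_upd_Cons val_upd_fun_upd)
  have "(\<exists>ds. length ds = length (w # ws) \<and> set ds \<subseteq> carr M \<and> P ds) \<longleftrightarrow>
      (\<exists>a\<in>carr M. \<exists>ds. length ds = length ws \<and> set ds \<subseteq> carr M \<and> P (a # ds))" for P
  proof
    assume "\<exists>ds. length ds = length (w # ws) \<and> set ds \<subseteq> carr M \<and> P ds"
    then obtain a ds where "length ds = length ws" "set (a # ds) \<subseteq> carr M" "P (a # ds)"
      by (auto simp: length_Suc_conv)
    then show "\<exists>a\<in>carr M. \<exists>ds. length ds = length ws \<and> set ds \<subseteq> carr M \<and> P (a # ds)" by auto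
  next
    assume "\<exists>a\<in>carr M. \<exists>ds. length ds = length ws \<and> set ds \<subseteq> carr M \<and> P (a # ds)"
    then show "\<exists>ds. length ds = length (w # ws) \<and> set ds \<subseteq> carr M \<and> P ds"
      by (metis insert_subset length_Cons list.simps(15))
  qed
  then show ?case by (simp add: IH)
qed

lemma FV_exs: "FV (exs ws \<phi>) = FV \<phi> - set ws"
  by (induction ws) auto

lemma wff_exs: "wff af ar (exs ws \<phi>) = wff af ar \<phi>"
  by (induction ws) auto

lemma freefor_exs:
  "(\<forall>w\<in>set ws. \<forall>u. u \<noteq> w \<longrightarrow> w \<notin> FVt (\<sigma> u)) \<Longrightarrow> (\<forall>\<sigma>. freefor \<phi> \<sigma>) \<Longrightarrow> freefor (exs ws \<phi>) \<sigma>"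
proof (induction ws arbitrary: \<sigma>)
  case (Cons w ws)
  have "freefor (exs ws \<phi>) (\<sigma>(w := Var w))"
    using Cons.prems by (intro Cons.IH) auto
  then show ?case using Cons.prems by auto
qed simp

fun conjs :: "('f, 'r, 'd) fm list \<Rightarrow> ('f, 'r, 'd) fm" where
  "conjs [] = Top"
| "conjs (\<phi> # \<phi>s) = Conj \<phi> (conjs \<phi>s)"

lemma sat_conjs: "sat M \<rho> (conjs \<phi>s) \<longleftrightarrow> (\<forall>\<phi>\<in>set \<phi>s. sat M \<rho> \<phi>)"
  by (induction \<phi>s) auto

lemma FV_conjs: "FV (conjs \<phi>s) = (\<Union>\<phi>\<in>set \<phi>s. FV \<phi>)"
  by (induction \<phi>s) auto

lemma wff_conjs: "wff af ar (conjs \<phi>s) \<longleftrightarrow> (\<forall>\<phi>\<in>set \<phi>s. wff af ar \<phi>)"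
  by (induction \<phi>s) auto

lemma freefor_conjs: "freefor (conjs \<phi>s) \<sigma> \<longleftrightarrow> (\<forall>\<phi>\<in>set \<phi>s. freefor \<phi> \<sigma>)"
  by (induction \<phi>s) auto

lemma sat_eqs: "sat M \<rho> (eqs ps) \<longleftrightarrow> (\<forall>(u, w)\<in>set ps. \<rho> u = \<rho> w)"
  by (induction ps rule: eqs.induct) auto

lemma FV_eqs: "FV (eqs ps) = fst ` set ps \<union> snd ` set ps"
  by (induction ps rule: eqs.induct) auto

lemma wff_eqs: "wff af ar (eqs ps)"
  by (induction ps rule: eqs.induct) auto

lemma freefor_id: "(\<forall>u\<in>FV \<phi>. \<sigma> u = Var u) \<Longrightarrow> freefor \<phi> \<sigma>"
  by (induction \<phi> arbitrary: \<sigma>) auto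

lemma ren_notin: "u \<notin> set y \<Longrightarrow> ren y z u = Var u"
proof -
  assume "u \<notin> set y"
  then have "map_of (zip y z) u = None" by (auto simp: map_of_eq_None_iff dest: set_zip_leftD)
  then show ?thesis by (simp add: ren_def)
qed

lemma ren_nth: "distinct y \<Longrightarrow> length y = length z \<Longrightarrow> i < length y \<Longrightarrow> ren y z (y ! i) = Var (z ! i)"
  by (simp add: ren_def map_of_zip_nth)

lemma FVt_ren: "FVt (ren y z u) \<subseteq> insert u (set z)"
  by (auto simp: ren_def split: option.splits dest: map_of_SomeD set_zip_rightD)

lemma FVt_ren_mem: "u \<in> set y \<Longrightarrow> length y = length z \<Longrightarrow> FVt (ren y z u) \<subseteq> set z"
  by (auto simp: ren_def map_of_eq_None_iff image_set map_fst_zip split: option.splits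
      dest: map_of_SomeD set_zip_rightD)

lemma wft_ren: "wft af (ren y z u)"
  by (auto simp: ren_def split: option.splits)

section \<open>Isomorphisms of \<open>\<bbbS>\<close>-indexed structures\<close>

definition is_iso :: "('f \<Rightarrow> nat) \<Rightarrow> ('r \<Rightarrow> nat) \<Rightarrow> ('f, 'r, 's) str \<Rightarrow> ('f, 'r, 's) str
    \<Rightarrow> ('s set \<Rightarrow> 's set) \<Rightarrow> bool" where
  "is_iso af ar M N h \<longleftrightarrow> bij_betw h (carr M) (carr N) \<and> (\<forall>c. c \<notin> carr M \<longrightarrow> h c = {}) \<and>
      (\<forall>f xs. length xs = af f \<and> set xs \<subseteq> carr M \<longrightarrow> h (fn M f xs) = fn N f (map h xs)) \<and>
      (\<forall>r xs. length xs = ar r \<and> set xs \<subseteq> carr M \<longrightarrow> (rl N r (map h xs) \<longleftrightarrow> rl M r xs))"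

lemma mem_IT_iff:
  "(M, N, h) \<in> IT af ar S T \<longleftrightarrow> M \<in> MT af ar S T \<and> N \<in> MT af ar S T \<and> is_iso af ar M N h"
  by (simp add: IT_def is_iso_def)

lemma empty_notin_carr: "is_str af ar S M \<Longrightarrow> {} \<notin> carr M"
  by (auto simp: is_str_def)

lemma iso_empty: "is_str af ar S M \<Longrightarrow> is_iso af ar M N h \<Longrightarrow> h {} = {}"
  by (auto simp: is_iso_def dest: empty_notin_carr)

text \<open>Values of terms lie in the carrier or are the junk value \<open>{}\<close>; an isomorphism
respects this dichotomy.\<close>

lemma iso_map_subset_carr_iff:
  assumes "is_str af ar S M" "is_str af ar S N" "is_iso af ar M N h" "set xs \<subseteq> insert {} (carr M)"
  shows "set (map h xs) \<subseteq> carr N \<longleftrightarrow> set xs \<subseteq> carr M"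
proof
  assume hxs: "set (map h xs) \<subseteq> carr N"
  show "set xs \<subseteq> carr M"
  proof
    fix c assume c: "c \<in> set xs"
    show "c \<in> carr M"
    proof (rule ccontr)
      assume "c \<notin> carr M"
      then have "h c = {}" using c assms(4) iso_empty[OF assms(1,3)] by auto
      moreover have "h c \<in> carr N" using hxs c by auto
      ultimately show False using empty_notin_carr[OF assms(2)] by simp
    qed
  qed
next
  assume "set xs \<subseteq> carr M"
  then show "set (map h xs) \<subseteq> carr N" using assms(3) by (auto simp: is_iso_def bij_betw_def)
qed

lemma iso_inj_on_insert_empty:
  assumes "is_str af ar S M" "is_str af ar S N" "is_iso af ar M N h"
  shows "inj_on h (insert {} (carr M))"
proof -
  have "inj_on h (carr M)" using assms(3) by (auto simp: is_iso_def bij_betw_def)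
  moreover have "h {} \<notin> h ` carr M"
    using iso_empty[OF assms(1,3)] empty_notin_carr[OF assms(2)] assms(3)
    by (auto simp: is_iso_def bij_betw_def)
  ultimately show ?thesis using empty_notin_carr[OF assms(1)] by (simp add: inj_on_insert)
qed

lemma evalt_iso:
  assumes "is_str af ar S M" "is_str af ar S N" "is_iso af ar M N h"
    and "\<forall>v. \<rho> v \<in> insert {} (carr M)"
  shows "evalt M \<rho> t \<in> insert {} (carr M) \<and> evalt N (\<lambda>v. h (\<rho> v)) t = h (evalt M \<rho> t)"
proof (induction t)
  case (Var v) then show ?case using assms(4) by simp
next
  case (Fun f ts)
  define xs where "xs = map (evalt M \<rho>) ts"
  have xs: "set xs \<subseteq> insert {} (carr M)" using Fun by (auto simp: xs_def)
  have m: "map (evalt N (\<lambda>v. h (\<rho> v))) ts = map h xs" using Fun by (auto simp: xs_def)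
  show ?case
  proof (cases "length xs = af f \<and> set xs \<subseteq> carr M")
    case True
    then have "fn M f xs \<in> carr M" using assms(1) unfolding is_str_def by metis
    moreover have "h (fn M f xs) = fn N f (map h xs)" using True assms(3) by (auto simp: is_iso_def)
    ultimately show ?thesis using m by (simp add: xs_def[symmetric])
  next
    case False
    then have "fn M f xs = {}" using assms(1) unfolding is_str_def by metis
    moreover have "\<not> (length (map h xs) = af f \<and> set (map h xs) \<subseteq> carr N)"
      using False iso_map_subset_carr_iff[OF assms(1-3) xs] by simp
    then have "fn N f (map h xs) = {}" using assms(2) unfolding is_str_def by metis
    ultimately show ?thesis using m iso_empty[OF assms(1,3)] by (simp add: xs_def[symmetric])
  qed
qed

lemma sat_iso:
  assumes "is_str af ar S M" "is_str af ar S N" "is_iso af ar M N h"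
  shows "\<forall>v. \<rho> v \<in> insert {} (carr M) \<Longrightarrow> sat N (\<lambda>v. h (\<rho> v)) \<phi> = sat M \<rho> \<phi>"
proof (induction \<phi> arbitrary: \<rho>)
  case (Rel r ts)
  define xs where "xs = map (evalt M \<rho>) ts"
  have xs: "set xs \<subseteq> insert {} (carr M)" using evalt_iso[OF assms Rel] by (auto simp: xs_def)
  have m: "map (evalt N (\<lambda>v. h (\<rho> v))) ts = map h xs"
    using evalt_iso[OF assms Rel] by (auto simp: xs_def)
  have "rl N r (map h xs) = rl M r xs"
  proof (cases "length xs = ar r \<and> set xs \<subseteq> carr M")
    case True then show ?thesis using assms(3) by (auto simp: is_iso_def)
  next
    case False
    then have "\<not> rl M r xs" using assms(1) unfolding is_str_def by metis
    moreover have "\<not> (length (map h xs) = ar r \<and> set (map h xs) \<subseteq> carr N)"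
      using False iso_map_subset_carr_iff[OF assms(1-3) xs] by simp
    then have "\<not> rl N r (map h xs)" using assms(2) unfolding is_str_def by metis
    ultimately show ?thesis by simp
  qed
  then show ?case using m by (metis sat.simps(1) xs_def)
next
  case (Eq s t)
  have "evalt N (\<lambda>v. h (\<rho> v)) s = h (evalt M \<rho> s)" "evalt N (\<lambda>v. h (\<rho> v)) t = h (evalt M \<rho> t)"
    "evalt M \<rho> s \<in> insert {} (carr M)" "evalt M \<rho> t \<in> insert {} (carr M)"
    using evalt_iso[OF assms Eq] by auto
  moreover have "h (evalt M \<rho> s) = h (evalt M \<rho> t) \<longleftrightarrow> evalt M \<rho> s = evalt M \<rho> t"
    using inj_on_eq_iff[OF iso_inj_on_insert_empty[OF assms] calculation(3) calculation(4)] .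
  ultimately show ?case by simp
next
  case (Exi v \<phi>)
  have carr_N: "carr N = h ` carr M" using assms(3) by (simp add: is_iso_def bij_betw_def)
  have "(\<exists>a\<in>carr N. sat N ((\<lambda>v. h (\<rho> v))(v := a)) \<phi>) =
      (\<exists>b\<in>carr M. sat N ((\<lambda>v. h (\<rho> v))(v := h b)) \<phi>)"
    unfolding carr_N by blast
  also have "\<dots> = (\<exists>b\<in>carr M. sat M (\<rho>(v := b)) \<phi>)"
  proof (intro bex_cong refl)
    fix b assume b: "b \<in> carr M"
    have "(\<lambda>v. h (\<rho> v))(v := h b) = (\<lambda>u. h ((\<rho>(v := b)) u))" by (auto simp: fun_eq_iff)
    moreover have "\<forall>u. (\<rho>(v := b)) u \<in> insert {} (carr M)" using Exi.prems b by auto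
    moreover have "sat N (\<lambda>u. h ((\<rho>(v := b)) u)) \<phi> = sat M (\<rho>(v := b)) \<phi>"
      by (rule Exi.IH) (use calculation(2) in blast)
    ultimately show "sat N ((\<lambda>v. h (\<rho> v))(v := h b)) \<phi> = sat M (\<rho>(v := b)) \<phi>" by simp
  qed
  finally show ?case by simp
qed simp_all

lemma interp_iso:
  assumes "is_str af ar S M" "is_str af ar S N" "is_iso af ar M N h"
  shows "interp N x \<phi> = map h ` interp M x \<phi>"
proof
  have h0: "h {} = {}" using iso_empty[OF assms(1,3)] .
  have bij: "bij_betw h (carr M) (carr N)" using assms(3) by (simp add: is_iso_def)
  have sat_map: "sat N (val x (map h as)) \<phi> = sat M (val x as) \<phi>" if "set as \<subseteq> carr M" for as
    unfolding val_map[where h=h, OF h0] using that by (intro sat_iso[OF assms] allI val_in_carr)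
  show "map h ` interp M x \<phi> \<subseteq> interp N x \<phi>"
    using bij sat_map by (fastforce simp: interp_def bij_betw_def)
  show "interp N x \<phi> \<subseteq> map h ` interp M x \<phi>"
  proof
    fix bs assume bs: "bs \<in> interp N x \<phi>"
    define as where "as = map (inv_into (carr M) h) bs"
    have as_carr: "set as \<subseteq> carr M"
      using bs bij by (auto simp: as_def interp_def bij_betw_def inv_into_into)
    have bs_as: "bs = map h as"
      using bs bij by (auto simp: as_def interp_def bij_betw_def f_inv_into_f intro!: map_idI[symmetric])
    have "as \<in> interp M x \<phi>"
      using bs as_carr sat_map[OF as_carr] by (simp add: interp_def bs_as)
    then show "bs \<in> map h ` interp M x \<phi>" using bs_as by auto
  qed
qed

lemma MT_iso_closed:
  assumes "M \<in> MT af ar S T" "is_str af ar S N" "is_iso af ar M N h"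
  shows "N \<in> MT af ar S T"
proof -
  have M: "is_str af ar S M" using assms(1) by (simp add: MT_def)
  have "valid_in N x \<phi> \<psi>" if "(x, \<phi>, \<psi>) \<in> T" for x \<phi> \<psi>
  proof -
    have "interp M x \<phi> \<subseteq> interp M x \<psi>" using assms(1) that unfolding MT_def valid_in_def by auto
    then show ?thesis unfolding valid_in_def interp_iso[OF M assms(2,3)] by (rule image_mono)
  qed
  then show ?thesis using assms(2) by (auto simp: MT_def)
qed

lemma cls_eq:
  assumes "is_str af ar S M" "K \<in> carr M" "a \<in> K"
  shows "cls M a = K"
  unfolding cls_def
proof (rule the_equality)
  show "K \<in> carr M \<and> a \<in> K" using assms by simp
  fix c assume "c \<in> carr M \<and> a \<in> c"
  then show "c = K" using assms unfolding is_str_def pairwise_def disjnt_def by blast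
qed

lemma cls_in: "is_str af ar S M \<Longrightarrow> inM M a \<Longrightarrow> cls M a \<in> carr M \<and> a \<in> cls M a"
  using cls_eq unfolding inM_def by (metis UnionE)

lemma exists_class_reps:
  assumes "is_str af ar S M" "set as \<subseteq> carr M"
  obtains a0 where "set a0 \<subseteq> S" "\<forall>a\<in>set a0. inM M a" "as = map (cls M) a0"
proof -
  define a0 where "a0 = map (\<lambda>K. SOME a. a \<in> K) as"
  have rep: "(SOME a. a \<in> K) \<in> K" "K \<subseteq> S" if "K \<in> carr M" for K
    using assms(1) that by (auto simp: is_str_def some_in_eq)
  have "a \<in> S \<and> inM M a" if a: "a \<in> set a0" for a
  proof -
    obtain K where "K \<in> set as" "a = (SOME a. a \<in> K)" using a by (auto simp: a0_def)
    then show ?thesis using rep[of K] assms(2) unfolding inM_def by blast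
  qed
  moreover have "cls M (SOME a. a \<in> K) = K" if "K \<in> set as" for K
    using that assms(2) rep(1) cls_eq[OF assms(1)] by blast
  ultimately show thesis by (intro that[of a0]) (auto simp: a0_def intro: map_idI[symmetric])
qed

section \<open>Relabelling the classes of a structure\<close>

lemma infinite_bij_betw_Diff_finite:
  assumes "infinite S" "finite R"
  shows "\<exists>\<pi>. bij_betw \<pi> S (S - R)"
  using assms(2)
proof (induction R rule: finite_induct)
  case empty
  have "bij_betw id S (S - {})" by (simp add: bij_betw_id)
  then show ?case by blast
next
  case (insert r R)
  then obtain \<pi> where \<pi>: "bij_betw \<pi> S (S - R)" by blast
  have "infinite (S - R)" using assms(1) insert.hyps(1) by (simp add: Diff_infinite_finite)
  then obtain \<tau> where "bij_betw \<tau> (S - R) (S - R - {r})" by (metis infinite_imp_bij_betw)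
  then have "bij_betw (\<tau> \<circ> \<pi>) S (S - R - {r})" by (rule bij_betw_trans[OF \<pi>])
  moreover have "S - R - {r} = S - insert r R" by blast
  ultimately show ?case by metis
qed

lemma exists_relabelled_str:
  assumes N: "is_str af ar S N"
    and \<Phi>S: "\<And>K. K \<in> carr N \<Longrightarrow> \<Phi> K \<noteq> {} \<and> \<Phi> K \<subseteq> S"
    and \<Phi>disj: "\<And>K K'. K \<in> carr N \<Longrightarrow> K' \<in> carr N \<Longrightarrow> K \<noteq> K' \<Longrightarrow> \<Phi> K \<inter> \<Phi> K' = {}"
    and \<Phi>junk: "\<And>K. K \<notin> carr N \<Longrightarrow> \<Phi> K = {}"
  shows "\<exists>N'. is_str af ar S N' \<and> is_iso af ar N N' \<Phi>"
proof -
  have \<Phi>inj: "inj_on \<Phi> (carr N)" using \<Phi>S \<Phi>disj by (metis inf.idem inj_onI)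
  define C where "C = \<Phi> ` carr N"
  define \<Phi>i where "\<Phi>i = inv_into (carr N) \<Phi>"
  have \<Phi>iC: "\<Phi>i c \<in> carr N" if "c \<in> C" for c
    using that by (auto simp: \<Phi>i_def C_def inv_into_into)
  have map_\<Phi>i_\<Phi>: "map \<Phi>i (map \<Phi> xs) = xs" if "set xs \<subseteq> carr N" for xs
    using that \<Phi>inj by (induction xs) (auto simp: \<Phi>i_def)
  have map_\<Phi>_C: "set (map \<Phi> xs) \<subseteq> C" if "set xs \<subseteq> carr N" for xs
    using that by (auto simp: C_def)
  define N' where "N' = \<lparr>carr = C,
     fn = (\<lambda>f xs. if length xs = af f \<and> set xs \<subseteq> C then \<Phi> (fn N f (map \<Phi>i xs)) else {}),
     rl = (\<lambda>r xs. length xs = ar r \<and> set xs \<subseteq> C \<and> rl N r (map \<Phi>i xs))\<rparr>"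
  have fn_closed: "fn N f (map \<Phi>i xs) \<in> carr N" if "length xs = af f" "set xs \<subseteq> C" for f xs
  proof -
    have "length (map \<Phi>i xs) = af f \<and> set (map \<Phi>i xs) \<subseteq> carr N" using that \<Phi>iC by auto
    then show ?thesis using N unfolding is_str_def by metis
  qed
  have "is_str af ar S N'"
    unfolding is_str_def
  proof (intro conjI allI)
    show "\<forall>c\<in>carr N'. c \<noteq> {} \<and> c \<subseteq> S" using \<Phi>S by (auto simp: N'_def C_def)
    show "pairwise disjnt (carr N')"
      unfolding N'_def C_def pairwise_def disjnt_def using \<Phi>disj by auto
    show "if length xs = af f \<and> set xs \<subseteq> carr N' then fn N' f xs \<in> carr N' else fn N' f xs = {}"
      for f xs using fn_closed by (simp add: N'_def C_def)
    show "rl N' r xs \<longrightarrow> length xs = ar r \<and> set xs \<subseteq> carr N'" for r xs by (simp add: N'_def)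
  qed
  moreover have "is_iso af ar N N' \<Phi>"
    unfolding is_iso_def
  proof (intro conjI allI impI)
    show "bij_betw \<Phi> (carr N) (carr N')" using \<Phi>inj by (simp add: bij_betw_def N'_def C_def)
    show "\<Phi> c = {}" if "c \<notin> carr N" for c using \<Phi>junk that .
    show "\<Phi> (fn N f xs) = fn N' f (map \<Phi> xs)" if "length xs = af f \<and> set xs \<subseteq> carr N" for f xs
      using that map_\<Phi>i_\<Phi>[of xs] map_\<Phi>_C[of xs] by (simp add: N'_def)
    show "rl N' r (map \<Phi> xs) = rl N r xs" if "length xs = ar r \<and> set xs \<subseteq> carr N" for r xs
      using that map_\<Phi>i_\<Phi>[of xs] map_\<Phi>_C[of xs] by (simp add: N'_def)
  qed
  ultimately show ?thesis by blast
qed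

text \<open>Since \<open>\<bbbS>\<close> is infinite, the classes can be moved off any finite \<open>R \<subseteq> \<bbbS>\<close> and then
each \<open>c \<in> R\<close> put into the class prescribed by \<open>D\<close>.\<close>

lemma exists_iso_realising:
  assumes N: "is_str af ar S N" and inf: "infinite S" and "finite R" "R \<subseteq> S"
    and D: "\<forall>c\<in>R. D c \<in> carr N"
  shows "\<exists>N' \<Phi>. is_str af ar S N' \<and> is_iso af ar N N' \<Phi> \<and> (\<forall>c\<in>R. c \<in> \<Phi> (D c))"
proof -
  obtain \<pi> where \<pi>: "bij_betw \<pi> S (S - R)" using infinite_bij_betw_Diff_finite[OF inf \<open>finite R\<close>] by blast
  have carr_N: "K \<noteq> {} \<and> K \<subseteq> S" if "K \<in> carr N" for K using N that by (auto simp: is_str_def)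
  define \<Phi> where "\<Phi> K = (if K \<in> carr N then \<pi> ` K \<union> {c\<in>R. D c = K} else {})" for K
  have "\<Phi> K \<inter> \<Phi> K' = {}" if "K \<in> carr N" "K' \<in> carr N" "K \<noteq> K'" for K K'
  proof -
    have "K \<inter> K' = {}" using N that by (auto simp: is_str_def pairwise_def disjnt_def)
    then have "\<pi> ` K \<inter> \<pi> ` K' = {}"
      using \<pi> carr_N that by (metis bij_betw_def image_empty inj_on_image_Int)
    moreover have "\<pi> ` K \<inter> R = {}" "\<pi> ` K' \<inter> R = {}"
      using \<pi> carr_N that by (auto simp: bij_betw_def)
    ultimately show ?thesis using that by (auto simp: \<Phi>_def)
  qed
  moreover have "\<Phi> K \<noteq> {} \<and> \<Phi> K \<subseteq> S" if "K \<in> carr N" for K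
    using carr_N[OF that] \<pi> \<open>R \<subseteq> S\<close> that by (auto simp: \<Phi>_def bij_betw_def)
  ultimately obtain N' where "is_str af ar S N' \<and> is_iso af ar N N' \<Phi>"
    using exists_relabelled_str[OF N, of \<Phi>] by (auto simp: \<Phi>_def)
  moreover have "\<forall>c\<in>R. c \<in> \<Phi> (D c)" using D by (auto simp: \<Phi>_def)
  ultimately show ?thesis by blast
qed

section \<open>Basic open neighbourhoods\<close>

text \<open>The subbasic open sets of \<open>M\<^sub>\<bbbT>\<close> are the sets of models satisfying one atomic
fact about elements of \<open>\<bbbS>\<close>.\<close>

datatype ('f, 'r, 's) fact = FIn 's | FRel 'r "'s list" | FEq 's 's | FFn 'f "'s list" 's

fun fact_elems :: "('f, 'r, 's) fact \<Rightarrow> 's set" where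
  "fact_elems (FIn a) = {a}"
| "fact_elems (FRel r as) = set as"
| "fact_elems (FEq a b) = {a, b}"
| "fact_elems (FFn f as b) = insert b (set as)"

fun holds_fact :: "('f, 'r, 's) str \<Rightarrow> ('f, 'r, 's) fact \<Rightarrow> bool" where
  "holds_fact M (FIn a) = inM M a"
| "holds_fact M (FRel r as) = ((\<forall>a\<in>set as. inM M a) \<and> rl M r (map (cls M) as))"
| "holds_fact M (FEq a b) = (inM M a \<and> inM M b \<and> cls M a = cls M b)"
| "holds_fact M (FFn f as b) = ((\<forall>a\<in>set as. inM M a) \<and> inM M b \<and> fn M f (map (cls M) as) = cls M b)"

definition holds_facts :: "('f, 'r, 's) str \<Rightarrow> ('f, 'r, 's) fact list \<Rightarrow> bool" where
  "holds_facts M Fs \<longleftrightarrow> (\<forall>fa\<in>set Fs. holds_fact M fa)"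

definition facts_in :: "'s set \<Rightarrow> ('f, 'r, 's) fact list \<Rightarrow> bool" where
  "facts_in S Fs \<longleftrightarrow> (\<forall>fa\<in>set Fs. fact_elems fa \<subseteq> S)"

lemma finite_fact_elems: "finite (fact_elems fa)"
  by (cases fa) auto

lemma holds_fact_inM: "holds_fact M fa \<Longrightarrow> a \<in> fact_elems fa \<Longrightarrow> inM M a"
  by (cases fa) auto

lemma holds_facts_zip_FEq:
  "length a1 = length a2 \<Longrightarrow> holds_facts M (map (\<lambda>(u, w). FEq u w) (zip a1 a2)) \<longleftrightarrow>
    (\<forall>a\<in>set a1 \<union> set a2. inM M a) \<and> map (cls M) a1 = map (cls M) a2"
proof (induction a1 arbitrary: a2)
  case (Cons a a1)
  then show ?case by (cases a2) (auto simp: holds_facts_def)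
qed (simp add: holds_facts_def)

lemma MT_subbasis_eq_fact:
  assumes "V \<in> MT_subbasis af ar S T"
  obtains fa where "fact_elems fa \<subseteq> S" "V = {M \<in> MT af ar S T. holds_fact M fa}"
  using assms unfolding MT_subbasis_def
proof (elim UnE CollectE exE conjE)
  fix a assume "V = {M \<in> MT af ar S T. inM M a}" "a \<in> S"
  then show thesis using that[of "FIn a"] by simp
next
  fix r as assume "V = {M \<in> MT af ar S T. (\<forall>a\<in>set as. inM M a) \<and> rl M r (map (cls M) as)}"
    "set as \<subseteq> S"
  then show thesis using that[of "FRel r as"] by simp
next
  fix a b assume "V = {M \<in> MT af ar S T. inM M a \<and> inM M b \<and> cls M a = cls M b}" "a \<in> S" "b \<in> S"
  then show thesis using that[of "FEq a b"] by simp
next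
  fix f as b
  assume "V = {M \<in> MT af ar S T. (\<forall>a\<in>set as. inM M a) \<and> inM M b \<and> fn M f (map (cls M) as) = cls M b}"
    "set as \<subseteq> S" "b \<in> S"
  then show thesis using that[of "FFn f as b"] by simp
qed

lemma MT_openin_basic_nbhd:
  assumes "openin (MT_top af ar S T) U" "M \<in> U"
  shows "\<exists>Fs. facts_in S Fs \<and> holds_facts M Fs \<and> {N \<in> MT af ar S T. holds_facts N Fs} \<subseteq> U"
proof -
  let ?X = "MT af ar S T"
  have "generate_topology_on (insert ?X {V \<inter> ?X | V. V \<in> MT_subbasis af ar S T}) U"
    using assms(1) by (simp add: MT_top_def coarsest_top_def openin_topology_generated_by_iff)
  then have "\<forall>M\<in>U. \<exists>Fs. facts_in S Fs \<and> holds_facts M Fs \<and> {N \<in> ?X. holds_facts N Fs} \<subseteq> U"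
  proof (induction rule: generate_topology_on.induct)
    case (Int a b)
    show ?case
    proof
      fix M assume "M \<in> a \<inter> b"
      then obtain Fs1 Fs2 where "facts_in S Fs1" "holds_facts M Fs1" "{N \<in> ?X. holds_facts N Fs1} \<subseteq> a"
        "facts_in S Fs2" "holds_facts M Fs2" "{N \<in> ?X. holds_facts N Fs2} \<subseteq> b" using Int.IH by blast
      then show "\<exists>Fs. facts_in S Fs \<and> holds_facts M Fs \<and> {N \<in> ?X. holds_facts N Fs} \<subseteq> a \<inter> b"
        by (intro exI[of _ "Fs1 @ Fs2"]) (auto simp: facts_in_def holds_facts_def)
    qed
  next
    case (UN K)
    then show ?case by (meson UnionE Union_upper subset_trans)
  next
    case (Basis s)
    then show ?case
    proof (elim insertE CollectE exE conjE)
      assume "s = ?X"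
      then show ?thesis by (intro ballI exI[of _ "[]"]) (auto simp: facts_in_def holds_facts_def)
    next
      fix V assume s: "s = V \<inter> ?X" "V \<in> MT_subbasis af ar S T"
      obtain fa where "fact_elems fa \<subseteq> S" "V = {M \<in> ?X. holds_fact M fa}"
        using s(2) by (rule MT_subbasis_eq_fact)
      then show ?thesis using s by (intro ballI exI[of _ "[fa]"]) (auto simp: facts_in_def holds_facts_def)
    qed
  qed simp
  then show ?thesis using assms(2) by blast
qed

definition basic_nbhd :: "('f \<Rightarrow> nat) \<Rightarrow> ('r \<Rightarrow> nat) \<Rightarrow> 's set
    \<Rightarrow> (nat list \<times> ('f, 'r, 'd) fm \<times> ('f, 'r, 'd) fm) set \<Rightarrow> nat list \<Rightarrow> ('f, 'r, 'd) fm
    \<Rightarrow> ('f, 'r, 's) fact list \<Rightarrow> 's list \<Rightarrow> (('f, 'r, 's) str \<times> 's set list) set" where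
  "basic_nbhd af ar S T x \<phi> Fs a0 = {e \<in> extn af ar S T x \<phi>. holds_facts (fst e) Fs \<and>
      (\<forall>a\<in>set a0. inM (fst e) a) \<and> snd e = map (cls (fst e)) a0}"

lemma basic_nbhd_Int:
  assumes "p \<in> basic_nbhd af ar S T x \<phi> Fs1 a1" "p \<in> basic_nbhd af ar S T x \<phi> Fs2 a2"
  defines "Fs \<equiv> Fs1 @ Fs2 @ map (\<lambda>(u, w). FEq u w) (zip a1 a2)"
  shows "p \<in> basic_nbhd af ar S T x \<phi> Fs a1"
    and "basic_nbhd af ar S T x \<phi> Fs a1 \<subseteq> basic_nbhd af ar S T x \<phi> Fs1 a1 \<inter> basic_nbhd af ar S T x \<phi> Fs2 a2"
proof -
  have cls: "map (cls (fst p)) a1 = map (cls (fst p)) a2"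
    using assms(1,2) by (auto simp: basic_nbhd_def)
  then have len: "length a1 = length a2" by (metis length_map)
  have holds_Fs: "holds_facts M Fs \<longleftrightarrow> holds_facts M Fs1 \<and> holds_facts M Fs2 \<and>
      (\<forall>a\<in>set a1 \<union> set a2. inM M a) \<and> map (cls M) a1 = map (cls M) a2" for M
    using holds_facts_zip_FEq[OF len, of M] by (auto simp: Fs_def holds_facts_def)
  show "p \<in> basic_nbhd af ar S T x \<phi> Fs a1"
    using assms(1,2) cls unfolding holds_Fs basic_nbhd_def by auto
  show "basic_nbhd af ar S T x \<phi> Fs a1 \<subseteq> basic_nbhd af ar S T x \<phi> Fs1 a1 \<inter> basic_nbhd af ar S T x \<phi> Fs2 a2"
    unfolding basic_nbhd_def holds_Fs by auto
qed

definition ext_subbasis :: "('f \<Rightarrow> nat) \<Rightarrow> ('r \<Rightarrow> nat) \<Rightarrow> 's set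
    \<Rightarrow> (nat list \<times> ('f, 'r, 'd) fm \<times> ('f, 'r, 'd) fm) set \<Rightarrow> nat list \<Rightarrow> ('f, 'r, 'd) fm
    \<Rightarrow> (('f, 'r, 's) str \<times> 's set list) set set" where
  "ext_subbasis af ar S T x \<phi> =
     {{e \<in> extn af ar S T x \<phi>. fst e \<in> U} | U. openin (MT_top af ar S T) U}
   \<union> {{(M, map (cls M) as) | M. M \<in> MT af ar S T \<and> (\<forall>a\<in>set as. inM M a) \<and>
        map (cls M) as \<in> interp M x \<phi>} | as. set as \<subseteq> S}"

lemma ext_top_eq: "ext_top af ar S T x \<phi> = coarsest_top (extn af ar S T x \<phi>) (ext_subbasis af ar S T x \<phi>)"
  by (simp add: ext_top_def ext_subbasis_def)

lemma topspace_ext_top: "topspace (ext_top af ar S T x \<phi>) = extn af ar S T x \<phi>"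
  by (auto simp: ext_top_def coarsest_top_def)

lemma ext_subbasis_basic_nbhd:
  assumes "s \<in> insert (extn af ar S T x \<phi>) {U \<inter> extn af ar S T x \<phi> | U. U \<in> ext_subbasis af ar S T x \<phi>}"
    (is "s \<in> insert ?X _")
    and "p \<in> s"
  shows "\<exists>Fs a0. facts_in S Fs \<and> set a0 \<subseteq> S \<and> p \<in> basic_nbhd af ar S T x \<phi> Fs a0 \<and>
    basic_nbhd af ar S T x \<phi> Fs a0 \<subseteq> s"
proof -
  have reps: "\<exists>a0. set a0 \<subseteq> S \<and> p \<in> basic_nbhd af ar S T x \<phi> Fs a0"
    if pX: "p \<in> ?X" and hFs: "holds_facts (fst p) Fs" for Fs
  proof -
    obtain M as where p: "p = (M, as)" "M \<in> MT af ar S T" "as \<in> interp M x \<phi>"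
      using pX by (cases p) (auto simp: extn_def)
    moreover have "is_str af ar S M" "set as \<subseteq> carr M" using p by (auto simp: MT_def interp_def)
    then obtain a0 where "set a0 \<subseteq> S" "\<forall>a\<in>set a0. inM M a" "as = map (cls M) a0"
      by (rule exists_class_reps)
    ultimately show ?thesis using pX hFs by (auto simp: basic_nbhd_def)
  qed
  have no_facts: "facts_in S []" "holds_facts M []" for M
    by (simp_all add: facts_in_def holds_facts_def)
  from assms(1) show ?thesis
    unfolding ext_subbasis_def
  proof (elim insertE CollectE exE conjE UnE)
    assume s: "s = ?X"
    then obtain a0 where "set a0 \<subseteq> S" "p \<in> basic_nbhd af ar S T x \<phi> [] a0"
      using reps[of "[]"] assms(2) no_facts by blast
    moreover have "basic_nbhd af ar S T x \<phi> [] a0 \<subseteq> s" using s by (auto simp: basic_nbhd_def)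
    ultimately show ?thesis using no_facts by blast
  next
    fix V U assume s: "s = V \<inter> ?X" "V = {e \<in> ?X. fst e \<in> U}" "openin (MT_top af ar S T) U"
    then obtain Fs where Fs: "facts_in S Fs" "holds_facts (fst p) Fs"
      "{N \<in> MT af ar S T. holds_facts N Fs} \<subseteq> U"
      using MT_openin_basic_nbhd[OF s(3)] assms(2) by blast
    then obtain a0 where "set a0 \<subseteq> S" "p \<in> basic_nbhd af ar S T x \<phi> Fs a0"
      using reps s assms(2) by blast
    moreover have "basic_nbhd af ar S T x \<phi> Fs a0 \<subseteq> s"
      using Fs(3) s by (auto simp: basic_nbhd_def extn_def)
    ultimately show ?thesis using Fs(1) by blast
  next
    fix V as assume s: "s = V \<inter> ?X" "set as \<subseteq> S" "V = {(M, map (cls M) as) | M. M \<in> MT af ar S T \<and>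
      (\<forall>a\<in>set as. inM M a) \<and> map (cls M) as \<in> interp M x \<phi>}"
    then have "p \<in> basic_nbhd af ar S T x \<phi> [] as" "basic_nbhd af ar S T x \<phi> [] as \<subseteq> s"
      using assms(2) no_facts by (auto simp: basic_nbhd_def extn_def)
    then show ?thesis using s(2) no_facts by blast
  qed
qed

lemma ext_openin_basic_nbhd:
  assumes "openin (ext_top af ar S T x \<phi>) W" "p \<in> W"
  shows "\<exists>Fs a0. facts_in S Fs \<and> set a0 \<subseteq> S \<and> p \<in> basic_nbhd af ar S T x \<phi> Fs a0 \<and>
    basic_nbhd af ar S T x \<phi> Fs a0 \<subseteq> W"
proof -
  let ?P = "\<lambda>W p. \<exists>Fs a0. facts_in S Fs \<and> set a0 \<subseteq> S \<and> p \<in> basic_nbhd af ar S T x \<phi> Fs a0 \<and>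
    basic_nbhd af ar S T x \<phi> Fs a0 \<subseteq> W"
  have "generate_topology_on
      (insert (extn af ar S T x \<phi>) {U \<inter> extn af ar S T x \<phi> | U. U \<in> ext_subbasis af ar S T x \<phi>}) W"
    using assms(1) by (simp add: ext_top_eq coarsest_top_def openin_topology_generated_by_iff)
  then have "\<forall>p\<in>W. ?P W p"
  proof (induction rule: generate_topology_on.induct)
    case (Int a b)
    show ?case
    proof
      fix p assume p: "p \<in> a \<inter> b"
      obtain Fs1 a1 where 1: "facts_in S Fs1" "set a1 \<subseteq> S" "p \<in> basic_nbhd af ar S T x \<phi> Fs1 a1"
        "basic_nbhd af ar S T x \<phi> Fs1 a1 \<subseteq> a"
        using Int.IH(1) p by blast
      obtain Fs2 a2 where 2: "facts_in S Fs2" "set a2 \<subseteq> S" "p \<in> basic_nbhd af ar S T x \<phi> Fs2 a2"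
        "basic_nbhd af ar S T x \<phi> Fs2 a2 \<subseteq> b"
        using Int.IH(2) p by blast
      define Fs where "Fs = Fs1 @ Fs2 @ map (\<lambda>(u, w). FEq u w) (zip a1 a2)"
      have "fact_elems fa \<subseteq> S" if "fa \<in> set (map (\<lambda>(u, w). FEq u w) (zip a1 a2))" for fa
        using that 1(2) 2(2) by (auto elim!: in_set_zipE)
      then have "facts_in S Fs" using 1(1) 2(1) by (auto simp: facts_in_def Fs_def)
      moreover have "p \<in> basic_nbhd af ar S T x \<phi> Fs a1"
        "basic_nbhd af ar S T x \<phi> Fs a1 \<subseteq> a \<inter> b"
        using basic_nbhd_Int[OF 1(3) 2(3)] 1(4) 2(4) unfolding Fs_def by blast+
      ultimately show "?P (a \<inter> b) p" using 1(2) by blast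
    qed
  next
    case (UN K)
    then show ?case by (meson UnionE Union_upper subset_trans)
  next
    case (Basis s)
    show ?case using ext_subbasis_basic_nbhd[OF Basis] by blast
  qed simp
  then show ?thesis using assms(2) by blast
qed

section \<open>Cardinality bounds\<close>

lemma card_of_Un_ordLeq: "infinite B \<Longrightarrow> |X| \<le>o |B| \<Longrightarrow> |Y| \<le>o |B| \<Longrightarrow> |X \<union> Y| \<le>o |B|"
  using card_of_Un_ordLeq_infinite_Field[of "|B|" X Y] by (simp add: Field_card_of card_of_card_order_on)

lemma card_of_Times_ordLeq: "infinite B \<Longrightarrow> |X| \<le>o |B| \<Longrightarrow> |Y| \<le>o |B| \<Longrightarrow> |X \<times> Y| \<le>o |B|"
  using card_of_Sigma_ordLeq_infinite[of B X "\<lambda>_. Y"] by simp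

lemma card_of_image_ordLeq: "|X| \<le>o |B| \<Longrightarrow> |f ` X| \<le>o |B|"
  using card_of_image ordLeq_transitive by blast

lemma card_of_lists_ordLeq:
  assumes B: "infinite B" and A: "|A| \<le>o |B|"
  shows "|{l. set l \<subseteq> A}| \<le>o |B|"
proof -
  define L where "L n = {l. length l = n \<and> set l \<subseteq> A}" for n
  have "|L n| \<le>o |B|" for n
  proof (induction n)
    case 0
    have "L 0 = {[]}" by (auto simp: L_def)
    then show ?case using card_of_singl_ordLeq[of B "[]"] B by auto
  next
    case (Suc n)
    have "L (Suc n) = (\<lambda>(a, l). a # l) ` (A \<times> L n)"
      by (auto simp: L_def length_Suc_conv image_iff)
    then show ?case using card_of_image_ordLeq[OF card_of_Times_ordLeq[OF B A Suc.IH]] by metis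
  qed
  moreover have "{l. set l \<subseteq> A} = (\<Union>n. L n)" by (auto simp: L_def)
  ultimately show ?thesis
    using card_of_UNION_ordLeq_infinite[OF B] B infinite_iff_card_of_nat by (metis UNIV_I)
qed

lemma card_of_facts_ordLeq:
  assumes B: "infinite B" and "|UNIV :: 'f set| \<le>o |B|" "|UNIV :: 'r set| \<le>o |B|"
  shows "|{fa :: ('f, 'r, 's) fact. fact_elems fa \<subseteq> B}| \<le>o |B|"
proof -
  let ?L = "{l. set l \<subseteq> B}"
  have BB: "|B| \<le>o |B|" by (simp add: card_of_Card_order ordLeq_refl)
  have L: "|?L| \<le>o |B|" by (rule card_of_lists_ordLeq[OF B BB])
  have "{fa :: ('f, 'r, 's) fact. fact_elems fa \<subseteq> B} \<subseteq>
     (FIn ` B \<union> (\<lambda>(r, as). FRel r as) ` (UNIV \<times> ?L)) \<union>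
     ((\<lambda>(a, b). FEq a b) ` (B \<times> B) \<union> (\<lambda>(f, as, b). FFn f as b) ` (UNIV \<times> (?L \<times> B)))"
    (is "_ \<subseteq> ?U")
  proof
    fix fa :: "('f, 'r, 's) fact" assume "fa \<in> {fa. fact_elems fa \<subseteq> B}"
    then show "fa \<in> ?U" by (cases fa) force+
  qed
  moreover have "|?U| \<le>o |B|"
    using assms L BB
    by (intro card_of_Un_ordLeq card_of_image_ordLeq card_of_Times_ordLeq) simp_all
  ultimately show ?thesis using card_of_mono1 ordLeq_transitive by blast
qed

section \<open>Diagrams as geometric formulas\<close>

text \<open>A fact read with the elements of \<open>\<bbbS>\<close> as variables, via \<open>\<nu> :: 's \<Rightarrow> nat\<close>.  An
ill-formed fact becomes the empty disjunction, i.e. falsity.\<close>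

fun fact_fm :: "('f \<Rightarrow> nat) \<Rightarrow> ('r \<Rightarrow> nat) \<Rightarrow> ('s \<Rightarrow> nat) \<Rightarrow> ('f, 'r, 's) fact \<Rightarrow> ('f, 'r, 'd) fm" where
  "fact_fm af ar \<nu> (FIn a) = Top"
| "fact_fm af ar \<nu> (FRel r as) =
     (if length as = ar r then Rel r (map (\<lambda>a. Var (\<nu> a)) as) else Disj {} (\<lambda>_. Top))"
| "fact_fm af ar \<nu> (FEq a b) = Eq (Var (\<nu> a)) (Var (\<nu> b))"
| "fact_fm af ar \<nu> (FFn f as b) =
     (if length as = af f then Eq (Fun f (map (\<lambda>a. Var (\<nu> a)) as)) (Var (\<nu> b)) else Disj {} (\<lambda>_. Top))"

fun holds_fact_at :: "('f \<Rightarrow> nat) \<Rightarrow> ('r \<Rightarrow> nat) \<Rightarrow> ('f, 'r, 's) str \<Rightarrow> ('s \<Rightarrow> 's set)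
    \<Rightarrow> ('f, 'r, 's) fact \<Rightarrow> bool" where
  "holds_fact_at af ar M E (FIn a) = True"
| "holds_fact_at af ar M E (FRel r as) = (length as = ar r \<and> rl M r (map E as))"
| "holds_fact_at af ar M E (FEq a b) = (E a = E b)"
| "holds_fact_at af ar M E (FFn f as b) = (length as = af f \<and> fn M f (map E as) = E b)"

lemma sat_fact_fm: "sat M \<rho> (fact_fm af ar \<nu> fa) = holds_fact_at af ar M (\<lambda>a. \<rho> (\<nu> a)) fa"
  by (cases fa) (auto simp: comp_def)

lemma FV_fact_fm: "FV (fact_fm af ar \<nu> fa) \<subseteq> \<nu> ` fact_elems fa"
  by (cases fa) auto

lemma wff_fact_fm: "wff af ar (fact_fm af ar \<nu> fa)"
  by (cases fa) (auto simp: list_all_iff)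

lemma freefor_fact_fm: "freefor (fact_fm af ar \<nu> fa) \<sigma>"
  by (cases fa) auto

lemma holds_fact_at_cong:
  assumes "\<forall>a\<in>fact_elems fa. E a = E' a"
  shows "holds_fact_at af ar M E fa = holds_fact_at af ar M E' fa"
proof (cases fa)
  case (FRel r as)
  then have "map E as = map E' as" using assms by simp
  then show ?thesis using FRel by (metis holds_fact_at.simps(2))
next
  case (FFn f as b)
  then have "map E as = map E' as" "E b = E' b" using assms by simp_all
  then show ?thesis using FFn by (metis holds_fact_at.simps(4))
qed (use assms in auto)

lemma holds_fact_at_cls:
  assumes str: "is_str af ar S M" and h: "holds_fact M fa"
  shows "holds_fact_at af ar M (cls M) fa"
proof (cases fa)
  case (FRel r as)
  then have "rl M r (map (cls M) as)" using h by simp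
  then have "length (map (cls M) as) = ar r" using str unfolding is_str_def by blast
  then show ?thesis using h FRel by simp
next
  case (FFn f as b)
  have "cls M b \<in> carr M" using h FFn cls_in[OF str] by auto
  then have "fn M f (map (cls M) as) \<noteq> {}" using h FFn empty_notin_carr[OF str] by auto
  then have "length as = af f" using str unfolding is_str_def by (metis length_map)
  then show ?thesis using h FFn by simp
qed (use h in auto)

lemma holds_fact_at_iso:
  assumes "is_iso af ar N N' \<Phi>"
    and E: "\<forall>a\<in>fact_elems fa. E a \<in> carr N \<and> inM N' a \<and> cls N' a = \<Phi> (E a)"
    and h: "holds_fact_at af ar N E fa"
  shows "holds_fact N' fa"
proof (cases fa)
  case (FRel r as)
  have "set (map E as) \<subseteq> carr N" using E FRel by auto
  then have "rl N' r (map \<Phi> (map E as)) = rl N r (map E as)"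
    using assms(1) h FRel unfolding is_iso_def by (metis holds_fact_at.simps(2) length_map)
  then have "rl N' r (map \<Phi> (map E as))" using h FRel by (simp del: map_map)
  moreover have "map (cls N') as = map \<Phi> (map E as)" using E FRel by simp
  ultimately show ?thesis using FRel E by (simp del: map_map)
next
  case (FFn f as b)
  have "set (map E as) \<subseteq> carr N" using E FFn by auto
  then have "\<Phi> (fn N f (map E as)) = fn N' f (map \<Phi> (map E as))"
    using assms(1) h FFn unfolding is_iso_def by (metis holds_fact_at.simps(4) length_map)
  then have "fn N' f (map \<Phi> (map E as)) = cls N' b" using h FFn E by (simp del: map_map)
  moreover have "map (cls N') as = map \<Phi> (map E as)" using E FFn by simp
  ultimately show ?thesis using FFn E by (simp del: map_map)
qed (use E h in auto)

definition var_eqs :: "nat list \<Rightarrow> ('s \<Rightarrow> nat) \<Rightarrow> 's list \<Rightarrow> ('f, 'r, 'd) fm" where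
  "var_eqs vs \<nu> cs = conjs (map (\<lambda>(v, c). Eq (Var v) (Var (\<nu> c))) (zip vs cs))"

lemma sat_var_eqs:
  "length vs = length cs \<Longrightarrow> sat M \<rho> (var_eqs vs \<nu> cs) \<longleftrightarrow> map \<rho> vs = map (\<lambda>c. \<rho> (\<nu> c)) cs"
proof (induction vs arbitrary: cs)
  case (Cons v vs)
  then show ?case by (cases cs) (auto simp: var_eqs_def)
qed (simp add: var_eqs_def)

lemma FV_var_eqs: "FV (var_eqs vs \<nu> cs) \<subseteq> set vs \<union> \<nu> ` set cs"
  by (auto simp: var_eqs_def FV_conjs elim!: in_set_zipE)

text \<open>A diagram \<open>(cs, Fs, a0, b0)\<close> lists distinct elements \<open>cs\<close> of \<open>\<bbbS>\<close>, facts \<open>Fs\<close> about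
them and representatives \<open>a0\<close>, \<open>b0\<close> of an input and an output tuple.  As a formula in
context \<open>x @ y\<close>, the element \<open>cs ! i\<close> becomes the bound variable \<open>n + i\<close>.\<close>

type_synonym ('f, 'r, 's) diagram = "'s list \<times> ('f, 'r, 's) fact list \<times> 's list \<times> 's list"

fun list_pos :: "'a list \<Rightarrow> 'a \<Rightarrow> nat" where
  "list_pos [] c = 0"
| "list_pos (a # l) c = (if a = c then 0 else Suc (list_pos l c))"

lemma list_pos_nth: "c \<in> set l \<Longrightarrow> list_pos l c < length l \<and> l ! list_pos l c = c"
  by (induction l) auto

lemma inj_on_list_pos: "inj_on (\<lambda>c. n + list_pos cs c) (set cs)"
  by (rule inj_onI) (metis add_left_imp_eq list_pos_nth)

definition diagram_ok :: "nat list \<Rightarrow> nat list \<Rightarrow> ('f, 'r, 's) diagram \<Rightarrow> bool" where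
  "diagram_ok x y d \<longleftrightarrow> (case d of (cs, Fs, a0, b0) \<Rightarrow> distinct cs \<and>
     (\<forall>fa\<in>set Fs. fact_elems fa \<subseteq> set cs) \<and> set a0 \<subseteq> set cs \<and> set b0 \<subseteq> set cs \<and>
     length a0 = length x \<and> length b0 = length y)"

definition diagram_body :: "('f \<Rightarrow> nat) \<Rightarrow> ('r \<Rightarrow> nat) \<Rightarrow> nat \<Rightarrow> nat list \<Rightarrow> nat list
    \<Rightarrow> ('f, 'r, 's) diagram \<Rightarrow> ('f, 'r, 'd) fm" where
  "diagram_body af ar n x y d = (case d of (cs, Fs, a0, b0) \<Rightarrow> let \<nu> = (\<lambda>c. n + list_pos cs c) in
     conjs (map (fact_fm af ar \<nu>) Fs @ [var_eqs x \<nu> a0, var_eqs y \<nu> b0]))"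

definition diagram_fm :: "('f \<Rightarrow> nat) \<Rightarrow> ('r \<Rightarrow> nat) \<Rightarrow> nat \<Rightarrow> nat list \<Rightarrow> nat list
    \<Rightarrow> ('f, 'r, 's) diagram \<Rightarrow> ('f, 'r, 'd) fm" where
  "diagram_fm af ar n x y d =
     exs (map (\<lambda>c. n + list_pos (fst d) c) (fst d)) (diagram_body af ar n x y d)"

definition diagram_holds_at :: "('f \<Rightarrow> nat) \<Rightarrow> ('r \<Rightarrow> nat) \<Rightarrow> ('f, 'r, 's) str \<Rightarrow> ('s \<Rightarrow> 's set)
    \<Rightarrow> ('f, 'r, 's) diagram \<Rightarrow> 's set list \<Rightarrow> 's set list \<Rightarrow> bool" where
  "diagram_holds_at af ar N E d as bs \<longleftrightarrow> (case d of (cs, Fs, a0, b0) \<Rightarrow>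
     (\<forall>fa\<in>set Fs. holds_fact_at af ar N E fa) \<and> as = map E a0 \<and> bs = map E b0)"

lemma diagram_holds_at_cong:
  assumes "diagram_ok x y (cs, Fs, a0, b0)" "\<forall>c\<in>set cs. E c = E' c"
  shows "diagram_holds_at af ar N E (cs, Fs, a0, b0) as bs = diagram_holds_at af ar N E' (cs, Fs, a0, b0) as bs"
proof -
  have "holds_fact_at af ar N E fa = holds_fact_at af ar N E' fa" if "fa \<in> set Fs" for fa
    using assms that by (intro holds_fact_at_cong) (auto simp: diagram_ok_def)
  moreover have "map E a0 = map E' a0" "map E b0 = map E' b0"
    using assms by (auto simp: diagram_ok_def)
  ultimately show ?thesis by (auto simp: diagram_holds_at_def)
qed

lemma wff_diagram_fm: "wff af ar (diagram_fm af ar n x y d)"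
  by (auto simp: diagram_fm_def diagram_body_def wff_exs wff_conjs wff_fact_fm var_eqs_def
      wff_conjs split: prod.splits)

lemma FV_diagram_fm: "diagram_ok x y d \<Longrightarrow> FV (diagram_fm af ar n x y d) \<subseteq> set x \<union> set y"
proof -
  assume ok: "diagram_ok x y d"
  obtain cs Fs a0 b0 where d: "d = (cs, Fs, a0, b0)" by (cases d)
  define \<nu> where "\<nu> = (\<lambda>c. n + list_pos cs c)"
  have "FV (fact_fm af ar \<nu> fa) \<subseteq> \<nu> ` set cs" if "fa \<in> set Fs" for fa
  proof -
    have "fact_elems fa \<subseteq> set cs" using ok that by (auto simp: d diagram_ok_def)
    then show ?thesis using FV_fact_fm[of af ar \<nu> fa] by blast
  qed
  moreover have "set a0 \<subseteq> set cs" "set b0 \<subseteq> set cs" using ok by (auto simp: d diagram_ok_def)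
  then have "FV (var_eqs x \<nu> a0) \<subseteq> set x \<union> \<nu> ` set cs" "FV (var_eqs y \<nu> b0) \<subseteq> set y \<union> \<nu> ` set cs"
    using FV_var_eqs[of x \<nu> a0] FV_var_eqs[of y \<nu> b0] by blast+
  ultimately show ?thesis
    by (auto simp: d diagram_fm_def diagram_body_def FV_exs FV_conjs \<nu>_def Let_def)
qed

lemma freefor_diagram_fm:
  assumes "\<forall>w. n \<le> w \<longrightarrow> (\<forall>u. u \<noteq> w \<longrightarrow> w \<notin> FVt (\<sigma> u))"
  shows "freefor (diagram_fm af ar n x y d) \<sigma>"
  using assms unfolding diagram_fm_def
  by (intro freefor_exs) (auto simp: diagram_body_def freefor_conjs freefor_fact_fm var_eqs_def
      split: prod.splits)

lemma sat_diagram_body: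
  assumes ok: "diagram_ok x y (cs, Fs, a0, b0)" and "distinct (x @ y)" and n: "\<forall>v\<in>set (x @ y). v < n"
    and "length as = length x" "length bs = length y" "length ds = length cs"
  defines "\<rho> \<equiv> val_upd (val (x @ y) (as @ bs)) (map (\<lambda>c. n + list_pos cs c) cs) ds"
  shows "sat N \<rho> (diagram_body af ar n x y (cs, Fs, a0, b0)) \<longleftrightarrow>
    diagram_holds_at af ar N (\<lambda>c. ds ! list_pos cs c) (cs, Fs, a0, b0) as bs"
proof -
  have ok': "distinct cs" "\<forall>fa\<in>set Fs. fact_elems fa \<subseteq> set cs" "set a0 \<subseteq> set cs"
    "set b0 \<subseteq> set cs" "length a0 = length x" "length b0 = length y"
    using ok by (auto simp: diagram_ok_def)
  have dmap: "distinct (map (\<lambda>c. n + list_pos cs c) cs)"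
    using ok'(1) inj_on_list_pos by (simp add: distinct_map)
  have \<rho>_cs: "\<rho> (n + list_pos cs c) = ds ! list_pos cs c" if "c \<in> set cs" for c
    using val_upd_nth[OF dmap, of ds "list_pos cs c"] list_pos_nth[OF that] assms(6) by (simp add: \<rho>_def)
  have \<rho>_xy: "\<rho> v = val (x @ y) (as @ bs) v" if "v \<in> set (x @ y)" for v
    using n that by (auto simp: \<rho>_def intro!: val_upd_notin)
  have "map \<rho> x = as" "map \<rho> y = bs"
    using \<rho>_xy val_append_left[OF assms(2,4,5)] val_append_right[OF assms(2,4,5)]
      val_nth[of x as] val_nth[of y bs] assms(2,4,5)
    by (auto intro!: nth_equalityI)
  then have "sat N \<rho> (diagram_body af ar n x y (cs, Fs, a0, b0)) \<longleftrightarrow>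
      (\<forall>fa\<in>set Fs. holds_fact_at af ar N (\<lambda>c. \<rho> (n + list_pos cs c)) fa) \<and>
      as = map (\<lambda>c. \<rho> (n + list_pos cs c)) a0 \<and> bs = map (\<lambda>c. \<rho> (n + list_pos cs c)) b0"
    using ok'(5,6) by (auto simp: diagram_body_def sat_conjs sat_fact_fm sat_var_eqs Let_def)
  also have "\<dots> \<longleftrightarrow> diagram_holds_at af ar N (\<lambda>c. ds ! list_pos cs c) (cs, Fs, a0, b0) as bs"
  proof -
    have "holds_fact_at af ar N (\<lambda>c. \<rho> (n + list_pos cs c)) fa =
        holds_fact_at af ar N (\<lambda>c. ds ! list_pos cs c) fa" if "fa \<in> set Fs" for fa
      using ok'(2) that \<rho>_cs by (intro holds_fact_at_cong) blast
    moreover have "map (\<lambda>c. \<rho> (n + list_pos cs c)) a0 = map (\<lambda>c. ds ! list_pos cs c) a0"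
      "map (\<lambda>c. \<rho> (n + list_pos cs c)) b0 = map (\<lambda>c. ds ! list_pos cs c) b0"
      using \<rho>_cs ok'(3,4) by auto
    ultimately show ?thesis by (simp add: diagram_holds_at_def del: map_eq_conv)
  qed
  finally show ?thesis .
qed

lemma sat_diagram_fm:
  fixes af :: "'f \<Rightarrow> nat" and ar :: "'r \<Rightarrow> nat"
  assumes ok: "diagram_ok x y (cs, Fs, a0, b0)" and "distinct (x @ y)" and "\<forall>v\<in>set (x @ y). v < n"
    and "length as = length x" "length bs = length y"
  shows "sat N (val (x @ y) (as @ bs)) (diagram_fm af ar n x y (cs, Fs, a0, b0) :: ('f, 'r, 'd) fm) \<longleftrightarrow>
    (\<exists>E. (\<forall>c\<in>set cs. E c \<in> carr N) \<and> diagram_holds_at af ar N E (cs, Fs, a0, b0) as bs)"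
    (is "?lhs \<longleftrightarrow> ?rhs")
proof -
  have "distinct (map (\<lambda>c. n + list_pos cs c) cs)"
    using ok inj_on_list_pos by (simp add: diagram_ok_def distinct_map)
  then have "sat N (val (x @ y) (as @ bs)) (diagram_fm af ar n x y (cs, Fs, a0, b0) :: ('f, 'r, 'd) fm) \<longleftrightarrow>
      (\<exists>ds. length ds = length cs \<and> set ds \<subseteq> carr N \<and>
        sat N (val_upd (val (x @ y) (as @ bs)) (map (\<lambda>c. n + list_pos cs c) cs) ds)
          (diagram_body af ar n x y (cs, Fs, a0, b0) :: ('f, 'r, 'd) fm))"
    by (simp add: diagram_fm_def sat_exs)
  also have "\<dots> \<longleftrightarrow> (\<exists>ds. length ds = length cs \<and> set ds \<subseteq> carr N \<and>
        diagram_holds_at af ar N (\<lambda>c. ds ! list_pos cs c) (cs, Fs, a0, b0) as bs)"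
    by (rule ex_cong1) (use sat_diagram_body[OF assms] in blast)
  finally have sat_fm: "sat N (val (x @ y) (as @ bs)) (diagram_fm af ar n x y (cs, Fs, a0, b0) :: ('f, 'r, 'd) fm) \<longleftrightarrow>
      (\<exists>ds. length ds = length cs \<and> set ds \<subseteq> carr N \<and>
        diagram_holds_at af ar N (\<lambda>c. ds ! list_pos cs c) (cs, Fs, a0, b0) as bs)" .
  show ?thesis
  proof
    assume ?lhs
    then obtain ds where "length ds = length cs" "set ds \<subseteq> carr N"
      "diagram_holds_at af ar N (\<lambda>c. ds ! list_pos cs c) (cs, Fs, a0, b0) as bs"
      using sat_fm by blast
    moreover have "ds ! list_pos cs c \<in> carr N" if "c \<in> set cs" for c
      using calculation(1,2) list_pos_nth[OF that] by (metis nth_mem subsetD)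
    ultimately show ?rhs by (intro exI[of _ "\<lambda>c. ds ! list_pos cs c"]) blast
  next
    assume ?rhs
    then obtain E where E: "\<forall>c\<in>set cs. E c \<in> carr N" "diagram_holds_at af ar N E (cs, Fs, a0, b0) as bs"
      by blast
    have "\<forall>c\<in>set cs. map E cs ! list_pos cs c = E c"
      using list_pos_nth[of _ cs] by simp
    then have "diagram_holds_at af ar N (\<lambda>c. map E cs ! list_pos cs c) (cs, Fs, a0, b0) as bs"
      using E(2) diagram_holds_at_cong[OF ok, of "\<lambda>c. map E cs ! list_pos cs c" E] by simp
    moreover have "length (map E cs) = length cs" "set (map E cs) \<subseteq> carr N" using E(1) by auto
    ultimately show ?lhs using sat_fm by blast
  qed
qed

lemma exists_iso_realising_diagram:
  assumes N: "N \<in> MT af ar S T" and "infinite S" and ok: "diagram_ok x y (cs, Fs, a0, b0)"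
    and "set cs \<subseteq> S" and E: "\<forall>c\<in>set cs. E c \<in> carr N"
    and holds: "\<forall>fa\<in>set Fs. holds_fact_at af ar N E fa"
  obtains N' \<Phi> where "N' \<in> MT af ar S T" "is_iso af ar N N' \<Phi>" "holds_facts N' Fs"
    "\<forall>c\<in>set cs. inM N' c \<and> cls N' c = \<Phi> (E c)"
proof -
  have strN: "is_str af ar S N" using N by (simp add: MT_def)
  obtain N' \<Phi> where N': "is_str af ar S N'" and iso: "is_iso af ar N N' \<Phi>"
    and c_in: "\<forall>c\<in>set cs. c \<in> \<Phi> (E c)"
    using exists_iso_realising[OF strN \<open>infinite S\<close> finite_set \<open>set cs \<subseteq> S\<close> E] by blast
  have cls_N': "\<forall>c\<in>set cs. inM N' c \<and> cls N' c = \<Phi> (E c)"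
  proof
    fix c assume c: "c \<in> set cs"
    then have "\<Phi> (E c) \<in> carr N'" using E iso by (auto simp: is_iso_def bij_betw_def)
    then show "inM N' c \<and> cls N' c = \<Phi> (E c)" using cls_eq[OF N'] c_in c by (auto simp: inM_def)
  qed
  moreover have "holds_facts N' Fs"
    unfolding holds_facts_def
  proof
    fix fa assume fa: "fa \<in> set Fs"
    have "fact_elems fa \<subseteq> set cs" using ok fa by (auto simp: diagram_ok_def)
    then show "holds_fact N' fa"
      using holds_fact_at_iso[OF iso _ holds[rule_format, OF fa]] E cls_N' by blast
  qed
  ultimately show thesis using that MT_iso_closed[OF N N' iso] iso by blast
qed

section \<open>The graph of a morphism of equivariant sheaves\<close>

locale eqsh_morphism =
  fixes af :: "'f \<Rightarrow> nat" and ar :: "'r \<Rightarrow> nat" and S :: "'s set"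
    and T :: "(nat list \<times> ('f, 'r, 'd) fm \<times> ('f, 'r, 'd) fm) set"
    and x y :: "nat list" and \<phi> \<psi> :: "('f, 'r, 'd) fm"
    and g :: "('f, 'r, 's) str \<times> 's set list \<Rightarrow> ('f, 'r, 's) str \<times> 's set list"
  assumes infinite_S: "infinite S"
    and distinct_x: "distinct x" and distinct_y: "distinct y" and disjoint_xy: "set x \<inter> set y = {}"
    and wff_\<phi>: "wff af ar \<phi>" and FV_\<phi>: "FV \<phi> \<subseteq> set x"
    and wff_\<psi>: "wff af ar \<psi>" and FV_\<psi>: "FV \<psi> \<subseteq> set y"
    and morphism: "eqsh_mor af ar S T x \<phi> y \<psi> g"
begin

lemma distinct_xy: "distinct (x @ y)"
  using distinct_x distinct_y disjoint_xy by simp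

lemma g_extn: "e \<in> extn af ar S T x \<phi> \<Longrightarrow> g e \<in> extn af ar S T y \<psi>"
  using morphism continuous_map_image_subset_topspace[of "ext_top af ar S T x \<phi>" "ext_top af ar S T y \<psi>" g]
  unfolding eqsh_mor_def topspace_ext_top by blast

lemma g_graph:
  assumes "N \<in> MT af ar S T" "as \<in> interp N x \<phi>"
  obtains bs where "g (N, as) = (N, bs)" "bs \<in> interp N y \<psi>"
proof -
  have e: "(N, as) \<in> extn af ar S T x \<phi>" using assms by (simp add: extn_def)
  then have "fst (g (N, as)) = N" using morphism by (auto simp: eqsh_mor_def)
  moreover have "g (N, as) \<in> extn af ar S T y \<psi>" using g_extn[OF e] .
  ultimately show thesis using that by (cases "g (N, as)") (auto simp: extn_def)
qed

lemma g_act: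
  "i \<in> IT af ar S T \<Longrightarrow> e \<in> extn af ar S T x \<phi> \<Longrightarrow> fst e = isod i \<Longrightarrow> g (act i e) = act i (g e)"
  using morphism unfolding eqsh_mor_def by blast

lemma openin_g_preimage:
  "openin (ext_top af ar S T y \<psi>) U \<Longrightarrow> openin (ext_top af ar S T x \<phi>) {e \<in> extn af ar S T x \<phi>. g e \<in> U}"
  using morphism openin_continuous_map_preimage[of "ext_top af ar S T x \<phi>" "ext_top af ar S T y \<psi>" g U]
  unfolding eqsh_mor_def by (simp add: topspace_ext_top)

text \<open>Variables below \<open>var_bound\<close> are those of the context; \<open>[var_bound..<diagram_base]\<close> is
reserved for renaming \<open>y\<close>, and the bound variables of diagrams start at \<open>diagram_base\<close>.\<close>

definition var_bound :: nat where
  "var_bound = Suc (Max (insert 0 (set (x @ y))))"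

definition diagram_base :: nat where
  "diagram_base = var_bound + length y"

lemma less_var_bound: "v \<in> set (x @ y) \<Longrightarrow> v < var_bound"
proof -
  assume "v \<in> set (x @ y)"
  then have "v \<le> Max (insert 0 (set (x @ y)))" by (intro Max_ge) auto
  then show ?thesis by (simp add: var_bound_def)
qed

lemma sat_diagram_fm_iff:
  assumes "diagram_ok x y (cs, Fs, a0, b0)" "length as = length x" "length bs = length y"
  shows "sat N (val (x @ y) (as @ bs)) (diagram_fm af ar diagram_base x y (cs, Fs, a0, b0) :: ('f, 'r, 'd) fm) \<longleftrightarrow>
    (\<exists>E. (\<forall>c\<in>set cs. E c \<in> carr N) \<and> diagram_holds_at af ar N E (cs, Fs, a0, b0) as bs)"
proof -
  have "\<forall>v\<in>set (x @ y). v < diagram_base"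
    using less_var_bound unfolding diagram_base_def by (meson trans_less_add1)
  then show ?thesis using sat_diagram_fm[OF assms(1) distinct_xy _ assms(2,3)] by blast
qed

definition forcing_diagrams :: "('f, 'r, 's) diagram set" where
  "forcing_diagrams = {(cs, Fs, a0, b0). diagram_ok x y (cs, Fs, a0, b0) \<and> set cs \<subseteq> S \<and>
     (\<forall>N\<in>MT af ar S T. (\<forall>c\<in>set cs. inM N c) \<and> holds_facts N Fs \<and> map (cls N) a0 \<in> interp N x \<phi> \<longrightarrow>
        g (N, map (cls N) a0) = (N, map (cls N) b0))}"

lemma forcing_diagram_ok: "d \<in> forcing_diagrams \<Longrightarrow> diagram_ok x y d"
  by (auto simp: forcing_diagrams_def)

text \<open>Equivariance: a diagram satisfied in \<open>N\<close> becomes literally true in an isomorphic copy,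
where forcing applies; transporting back along the isomorphism gives the value of \<open>g\<close>.\<close>

lemma forcing_diagram_graph:
  assumes d: "d \<in> forcing_diagrams" and N: "N \<in> MT af ar S T" and as: "as \<in> interp N x \<phi>"
    and lb: "length bs = length y"
    and sat: "sat N (val (x @ y) (as @ bs)) (diagram_fm af ar diagram_base x y d :: ('f, 'r, 'd) fm)"
  shows "g (N, as) = (N, bs)"
proof -
  obtain cs Fs a0 b0 where d_eq: "d = (cs, Fs, a0, b0)" by (cases d)
  have ok: "diagram_ok x y (cs, Fs, a0, b0)" and "set cs \<subseteq> S"
    and forces: "\<And>N'. N' \<in> MT af ar S T \<Longrightarrow> \<forall>c\<in>set cs. inM N' c \<Longrightarrow> holds_facts N' Fs \<Longrightarrow>
      map (cls N') a0 \<in> interp N' x \<phi> \<Longrightarrow> g (N', map (cls N') a0) = (N', map (cls N') b0)"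
    using d by (auto simp: forcing_diagrams_def d_eq)
  have la: "length as = length x" using as by (simp add: interp_def)
  obtain E where E: "\<forall>c\<in>set cs. E c \<in> carr N" "diagram_holds_at af ar N E (cs, Fs, a0, b0) as bs"
    using sat sat_diagram_fm_iff[OF ok la lb] by (auto simp: d_eq)
  then have holds: "\<forall>fa\<in>set Fs. holds_fact_at af ar N E fa" and "as = map E a0" "bs = map E b0"
    by (auto simp: diagram_holds_at_def)
  obtain N' \<Phi> where N': "N' \<in> MT af ar S T" and iso: "is_iso af ar N N' \<Phi>" "holds_facts N' Fs"
    and cls_N': "\<forall>c\<in>set cs. inM N' c \<and> cls N' c = \<Phi> (E c)"
    using exists_iso_realising_diagram[OF N infinite_S ok \<open>set cs \<subseteq> S\<close> E(1) holds] by blast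
  have a0_N': "map (cls N') a0 = map \<Phi> as" and b0_N': "map (cls N') b0 = map \<Phi> bs"
    using \<open>as = map E a0\<close> \<open>bs = map E b0\<close> ok cls_N' by (auto simp: diagram_ok_def)
  have strN: "is_str af ar S N" "is_str af ar S N'" using N N' by (simp_all add: MT_def)
  have "map \<Phi> as \<in> interp N' x \<phi>" using interp_iso[OF strN iso(1)] as by auto
  then have "g (N', map (cls N') a0) = (N', map (cls N') b0)"
    using forces[OF N'] cls_N' iso(2) unfolding a0_N' by blast
  then have forced: "g (N', map \<Phi> as) = (N', map \<Phi> bs)" unfolding a0_N' b0_N' .
  obtain bs' where g_N: "g (N, as) = (N, bs')" and bs': "bs' \<in> interp N y \<psi>"
    using g_graph[OF N as] .
  have "(N, N', \<Phi>) \<in> IT af ar S T" using N N' iso by (simp add: mem_IT_iff)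
  then have "g (N', map \<Phi> as) = (N', map \<Phi> bs')"
    using g_act[of "(N, N', \<Phi>)" "(N, as)"] N as g_N by (simp add: extn_def act_def isod_def isoc_def isofun_def)
  then have "map \<Phi> bs' = map \<Phi> bs" using forced by simp
  moreover have "set bs' \<union> set bs \<subseteq> carr N"
    using bs' E(1) \<open>bs = map E b0\<close> ok by (auto simp: interp_def diagram_ok_def)
  with iso(1) have "inj_on \<Phi> (set bs' \<union> set bs)"
    unfolding is_iso_def bij_betw_def by (metis inj_on_subset)
  ultimately have "bs' = bs" by (simp add: inj_on_map_eq_map)
  then show ?thesis using g_N by simp
qed

definition tuple_nbhd :: "nat list \<Rightarrow> ('f, 'r, 'd) fm \<Rightarrow> 's list \<Rightarrow> (('f, 'r, 's) str \<times> 's set list) set" where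
  "tuple_nbhd y' \<chi> b0 = {(M, map (cls M) b0) | M. M \<in> MT af ar S T \<and> (\<forall>a\<in>set b0. inM M a) \<and>
     map (cls M) b0 \<in> interp M y' \<chi>}"

lemma openin_tuple_nbhd: "set b0 \<subseteq> S \<Longrightarrow> openin (ext_top af ar S T y' \<chi>) (tuple_nbhd y' \<chi> b0)"
proof -
  assume "set b0 \<subseteq> S"
  then have "openin (ext_top af ar S T y' \<chi>) (tuple_nbhd y' \<chi> b0 \<inter> extn af ar S T y' \<chi>)"
    unfolding ext_top_def coarsest_top_def tuple_nbhd_def
    by (intro topology_generated_by_Basis) blast
  moreover have "tuple_nbhd y' \<chi> b0 \<subseteq> extn af ar S T y' \<chi>" by (auto simp: tuple_nbhd_def extn_def)
  ultimately show ?thesis by (simp add: Int_absorb2)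
qed

text \<open>Continuity: the preimage of the basic open set determined by representatives \<open>b0\<close> of
the value of \<open>g\<close> contains a basic open neighbourhood of the argument, and its data form
a forcing diagram.\<close>

lemma graph_forcing_diagram:
  assumes N: "N \<in> MT af ar S T" and as: "as \<in> interp N x \<phi>" and g_N: "g (N, as) = (N, bs)"
  shows "\<exists>d\<in>forcing_diagrams. sat N (val (x @ y) (as @ bs)) (diagram_fm af ar diagram_base x y d :: ('f, 'r, 'd) fm)"
proof -
  have strN: "is_str af ar S N" using N by (simp add: MT_def)
  have e: "(N, as) \<in> extn af ar S T x \<phi>" using N as by (simp add: extn_def)
  have bs: "bs \<in> interp N y \<psi>" using g_extn[OF e] g_N by (simp add: extn_def)
  then obtain b0 where b0: "set b0 \<subseteq> S" "\<forall>b\<in>set b0. inM N b" "bs = map (cls N) b0"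
    using exists_class_reps[OF strN, of bs] by (auto simp: interp_def)
  let ?U = "{e \<in> extn af ar S T x \<phi>. g e \<in> tuple_nbhd y \<psi> b0}"
  have "(N, as) \<in> ?U" using e g_N N b0 bs by (auto simp: tuple_nbhd_def)
  then obtain Fs a0 where Fs: "facts_in S Fs" "set a0 \<subseteq> S" "(N, as) \<in> basic_nbhd af ar S T x \<phi> Fs a0"
    "basic_nbhd af ar S T x \<phi> Fs a0 \<subseteq> ?U"
    using ext_openin_basic_nbhd[OF openin_g_preimage[OF openin_tuple_nbhd[OF b0(1)]]] by blast
  have holds_N: "holds_facts N Fs" "\<forall>a\<in>set a0. inM N a" "as = map (cls N) a0"
    using Fs(3) by (auto simp: basic_nbhd_def)
  obtain cs where cs: "set cs = (\<Union>fa\<in>set Fs. fact_elems fa) \<union> set a0 \<union> set b0" "distinct cs"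
    using finite_distinct_list[of "(\<Union>fa\<in>set Fs. fact_elems fa) \<union> set a0 \<union> set b0"]
      finite_fact_elems by blast
  have la: "length as = length x" and lb: "length bs = length y" using as bs by (simp_all add: interp_def)
  have ok: "diagram_ok x y (cs, Fs, a0, b0)" using cs la lb holds_N(3) b0(3) by (auto simp: diagram_ok_def)
  have "(cs, Fs, a0, b0) \<in> forcing_diagrams"
    unfolding forcing_diagrams_def
  proof (intro CollectI case_prodI conjI ballI impI)
    show "set cs \<subseteq> S" using cs Fs(1,2) b0(1) by (auto simp: facts_in_def)
    fix N' assume N': "N' \<in> MT af ar S T" and
      "(\<forall>c\<in>set cs. inM N' c) \<and> holds_facts N' Fs \<and> map (cls N') a0 \<in> interp N' x \<phi>"
    then have "(N', map (cls N') a0) \<in> basic_nbhd af ar S T x \<phi> Fs a0"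
      using cs by (auto simp: basic_nbhd_def extn_def)
    then have "g (N', map (cls N') a0) \<in> tuple_nbhd y \<psi> b0"
      and "map (cls N') a0 \<in> interp N' x \<phi>" using Fs(4) by (auto simp: extn_def)
    moreover obtain bs' where "g (N', map (cls N') a0) = (N', bs')"
      using g_graph[OF N' calculation(2)] .
    ultimately show "g (N', map (cls N') a0) = (N', map (cls N') b0)"
      by (auto simp: tuple_nbhd_def)
  qed (use ok in simp)
  moreover have "\<forall>c\<in>set cs. cls N c \<in> carr N"
    using cs holds_N(1,2) b0(2) holds_fact_inM cls_in[OF strN] by (fastforce simp: holds_facts_def)
  moreover have "diagram_holds_at af ar N (cls N) (cs, Fs, a0, b0) as bs"
    using holds_N holds_fact_at_cls[OF strN] b0(3) by (auto simp: holds_facts_def diagram_holds_at_def)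
  ultimately show ?thesis
    using sat_diagram_fm_iff[OF ok la lb] by blast
qed

end

section \<open>A geometric formula defining the graph\<close>

locale small_eqsh_morphism = eqsh_morphism af ar S T x y \<phi> \<psi> g
  for af :: "'f \<Rightarrow> nat" and ar :: "'r \<Rightarrow> nat" and S :: "'s set"
    and T :: "(nat list \<times> ('f, 'r, 'd) fm \<times> ('f, 'r, 'd) fm) set"
    and x y :: "nat list" and \<phi> \<psi> :: "('f, 'r, 'd) fm"
    and g :: "('f, 'r, 's) str \<times> 's set list \<Rightarrow> ('f, 'r, 's) str \<times> 's set list" +
  assumes card_fun_symbols: "|UNIV :: 'f set| \<le>o |S|"
    and card_rel_symbols: "|UNIV :: 'r set| \<le>o |S|"
    and card_disj_index: "|S| \<le>o |UNIV :: 'd set|"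
begin

lemma card_forcing_diagrams: "|forcing_diagrams| \<le>o |S|"
proof -
  let ?L = "{l. set l \<subseteq> S}" and ?F = "{fa :: ('f, 'r, 's) fact. fact_elems fa \<subseteq> S}"
  have SS: "|S| \<le>o |S|" by (simp add: card_of_Card_order ordLeq_refl)
  have L: "|?L| \<le>o |S|" by (rule card_of_lists_ordLeq[OF infinite_S SS])
  have LF: "|{l. set l \<subseteq> ?F}| \<le>o |S|"
    by (rule card_of_lists_ordLeq[OF infinite_S card_of_facts_ordLeq[OF infinite_S card_fun_symbols card_rel_symbols]])
  have sub: "forcing_diagrams \<subseteq> ?L \<times> ({l. set l \<subseteq> ?F} \<times> (?L \<times> ?L))"
  proof
    fix d assume "d \<in> forcing_diagrams"
    then obtain cs Fs a0 b0 where "d = (cs, Fs, a0, b0)" "set cs \<subseteq> S" "\<forall>fa\<in>set Fs. fact_elems fa \<subseteq> set cs"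
      "set a0 \<subseteq> set cs" "set b0 \<subseteq> set cs" by (auto simp: forcing_diagrams_def diagram_ok_def)
    then show "d \<in> ?L \<times> ({l. set l \<subseteq> ?F} \<times> (?L \<times> ?L))" by blast
  qed
  have "|?L \<times> ({l. set l \<subseteq> ?F} \<times> (?L \<times> ?L))| \<le>o |S|"
    by (rule card_of_Times_ordLeq[OF infinite_S L card_of_Times_ordLeq[OF infinite_S LF
          card_of_Times_ordLeq[OF infinite_S L L]]])
  then show ?thesis by (rule ordLeq_transitive[OF card_of_mono1[OF sub]])
qed

definition diagram_index :: "('f, 'r, 's) diagram \<Rightarrow> 'd" where
  "diagram_index = (SOME h. inj_on h forcing_diagrams)"

lemma inj_on_diagram_index: "inj_on diagram_index forcing_diagrams"
proof -
  have "|forcing_diagrams| \<le>o |UNIV :: 'd set|"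
    using card_forcing_diagrams card_disj_index ordLeq_transitive by blast
  then have "\<exists>h :: _ \<Rightarrow> 'd. inj_on h forcing_diagrams"
    using card_of_ordLeq[of forcing_diagrams "UNIV :: 'd set"] by blast
  then show ?thesis unfolding diagram_index_def by (rule someI_ex)
qed

definition graph_fm :: "('f, 'r, 'd) fm" where
  "graph_fm = Conj \<phi> (Disj (diagram_index ` forcing_diagrams)
     (\<lambda>i. diagram_fm af ar diagram_base x y (inv_into forcing_diagrams diagram_index i)))"

lemma sat_graph_fm:
  assumes N: "N \<in> MT af ar S T" and l: "length as = length x" "length bs = length y"
    and c: "set as \<subseteq> carr N" "set bs \<subseteq> carr N"
  shows "sat N (val (x @ y) (as @ bs)) graph_fm \<longleftrightarrow> as \<in> interp N x \<phi> \<and> g (N, as) = (N, bs)"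
proof -
  have "sat N (val (x @ y) (as @ bs)) \<phi> \<longleftrightarrow> sat N (val x as) \<phi>"
    using FV_\<phi> val_append_left[OF distinct_xy l] by (intro sat_cong) blast
  then have "sat N (val (x @ y) (as @ bs)) \<phi> \<longleftrightarrow> as \<in> interp N x \<phi>"
    using l c by (simp add: interp_def)
  moreover have "sat N (val (x @ y) (as @ bs)) graph_fm \<longleftrightarrow> sat N (val (x @ y) (as @ bs)) \<phi> \<and>
      (\<exists>d\<in>forcing_diagrams. sat N (val (x @ y) (as @ bs)) (diagram_fm af ar diagram_base x y d :: ('f, 'r, 'd) fm))"
    using inj_on_diagram_index by (auto simp: graph_fm_def inv_into_f_f)
  ultimately show ?thesis
    using forcing_diagram_graph[OF _ N _ l(2)] graph_forcing_diagram[OF N] by blast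
qed

lemma wff_graph_fm: "wff af ar graph_fm"
  using wff_\<phi> by (simp add: graph_fm_def wff_diagram_fm)

lemma FV_graph_fm: "FV graph_fm \<subseteq> set x \<union> set y"
proof -
  have "FV graph_fm = FV \<phi> \<union> (\<Union>d\<in>forcing_diagrams. FV (diagram_fm af ar diagram_base x y d :: ('f, 'r, 'd) fm))"
    using inj_on_diagram_index by (simp add: graph_fm_def inv_into_f_f)
  moreover have "(\<Union>d\<in>forcing_diagrams. FV (diagram_fm af ar diagram_base x y d :: ('f, 'r, 'd) fm))
      \<subseteq> set x \<union> set y"
    by (rule UN_least) (rule FV_diagram_fm[OF forcing_diagram_ok])
  ultimately show ?thesis using FV_\<phi> by blast
qed

definition fresh_vars :: "nat list" where
  "fresh_vars = [var_bound..<diagram_base]"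

lemma fresh_vars:
  "length fresh_vars = length y" "distinct fresh_vars" "set fresh_vars \<inter> set (x @ y) = {}"
  using less_var_bound by (fastforce simp: fresh_vars_def diagram_base_def)+

lemma freefor_graph_fm_ren: "freefor graph_fm (ren y fresh_vars)"
proof -
  have "freefor \<phi> (ren y fresh_vars)"
    using FV_\<phi> disjoint_xy by (intro freefor_id) (auto intro: ren_notin)
  moreover have "\<forall>w. diagram_base \<le> w \<longrightarrow> (\<forall>u. u \<noteq> w \<longrightarrow> w \<notin> FVt (ren y fresh_vars u :: 'f trm))"
    using FVt_ren[of y fresh_vars] by (fastforce simp: fresh_vars_def)
  then have "freefor (diagram_fm af ar diagram_base x y d :: ('f, 'r, 'd) fm) (ren y fresh_vars)"
    for d :: "('f, 'r, 's) diagram"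
    by (rule freefor_diagram_fm)
  ultimately show ?thesis by (simp add: graph_fm_def)
qed

lemma FV_subst_graph_fm_ren: "FV (subst graph_fm (ren y fresh_vars)) \<subseteq> set x \<union> set fresh_vars"
proof
  fix w assume "w \<in> FV (subst graph_fm (ren y fresh_vars))"
  then obtain u where u: "u \<in> set x \<union> set y" "w \<in> FVt (ren y fresh_vars u :: 'f trm)"
    using FV_subst[of graph_fm "ren y fresh_vars"] FV_graph_fm by blast
  show "w \<in> set x \<union> set fresh_vars"
  proof (cases "u \<in> set y")
    case True
    then show ?thesis using u(2) FVt_ren_mem[of u y fresh_vars] fresh_vars(1) by auto
  next
    case False
    then have "ren y fresh_vars u = (Var u :: 'f trm)" by (rule ren_notin)
    then show ?thesis using u False by simp
  qed
qed

lemma sat_subst_graph_fm_ren: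
  assumes "length as = length x" "length bs = length y" "length cs = length y"
  shows "sat N (val ((x @ y) @ fresh_vars) ((as @ bs) @ cs)) (subst graph_fm (ren y fresh_vars)) \<longleftrightarrow>
    sat N (val (x @ y) (as @ cs)) graph_fm"
proof -
  let ?\<rho> = "val ((x @ y) @ fresh_vars) ((as @ bs) @ cs)"
  have d3: "distinct ((x @ y) @ fresh_vars)" using distinct_xy fresh_vars by auto
  have l: "length (as @ bs) = length (x @ y)" "length cs = length fresh_vars"
    using assms fresh_vars(1) by simp_all
  have "evalt N ?\<rho> (ren y fresh_vars v) = val (x @ y) (as @ cs) v" if "v \<in> set x \<union> set y" for v
    using that
  proof
    assume v: "v \<in> set x"
    then have "v \<notin> set y" using disjoint_xy by blast
    then show ?thesis
      using v val_append_left[OF d3 l, of v] val_append_left[OF distinct_xy assms(1,2) v]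
        val_append_left[OF distinct_xy assms(1,3) v] by (simp add: ren_notin)
  next
    assume "v \<in> set y"
    then obtain i where i: "i < length y" "v = y ! i" by (auto simp: in_set_conv_nth)
    have "fresh_vars ! i \<in> set fresh_vars" using i fresh_vars(1) by simp
    then have "?\<rho> (fresh_vars ! i) = cs ! i"
      using val_append_right[OF d3 l] val_nth[OF fresh_vars(2)] i(1) l(2) fresh_vars(1) by simp
    moreover have "ren y fresh_vars v = (Var (fresh_vars ! i) :: 'f trm)"
      using i ren_nth[OF distinct_y fresh_vars(1)[symmetric] i(1)] by simp
    ultimately show ?thesis
      using i val_append_nth_right[OF distinct_xy assms(1,3) i(1)] by simp
  qed
  then have "sat N (\<lambda>v. evalt N ?\<rho> (ren y fresh_vars v)) graph_fm = sat N (val (x @ y) (as @ cs)) graph_fm"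
    using FV_graph_fm by (intro sat_cong) blast
  then show ?thesis unfolding sat_subst[OF freefor_graph_fm_ren] .
qed

lemma valid_graph_fm_dom_cod: "N \<in> MT af ar S T \<Longrightarrow> valid_in N (x @ y) graph_fm (Conj \<phi> \<psi>)"
  unfolding valid_in_def
proof
  fix zs assume N: "N \<in> MT af ar S T" and zs: "zs \<in> interp N (x @ y) graph_fm"
  obtain as bs where ab: "zs = as @ bs" "length as = length x" "length bs = length y"
    "set as \<subseteq> carr N" "set bs \<subseteq> carr N" "sat N (val (x @ y) (as @ bs)) graph_fm"
    using zs by (rule interp_append_split)
  then have as: "as \<in> interp N x \<phi>" and g_N: "g (N, as) = (N, bs)" using sat_graph_fm[OF N ab(2-5)] by auto
  obtain bs' where "g (N, as) = (N, bs')" "bs' \<in> interp N y \<psi>" using g_graph[OF N as] .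
  then have "sat N (val y bs) \<psi>" using g_N by (simp add: interp_def)
  then have "sat N (val (x @ y) (as @ bs)) \<psi>"
    using FV_\<psi> val_append_right[OF distinct_xy ab(2,3)] sat_cong[of \<psi> "val (x @ y) (as @ bs)" "val y bs" N]
    by blast
  moreover have "sat N (val x as) \<phi>" using as by (simp add: interp_def)
  then have "sat N (val (x @ y) (as @ bs)) \<phi>"
    using FV_\<phi> val_append_left[OF distinct_xy ab(2,3)] sat_cong[of \<phi> "val (x @ y) (as @ bs)" "val x as" N]
    by blast
  ultimately show "zs \<in> interp N (x @ y) (Conj \<phi> \<psi>)" using zs by (simp add: interp_def ab(1))
qed

lemma valid_graph_fm_total: "N \<in> MT af ar S T \<Longrightarrow> valid_in N x \<phi> (exs y graph_fm)"
  unfolding valid_in_def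
proof
  fix as assume N: "N \<in> MT af ar S T" and as: "as \<in> interp N x \<phi>"
  obtain bs where g_N: "g (N, as) = (N, bs)" and bs: "bs \<in> interp N y \<psi>" using g_graph[OF N as] .
  have la: "length as = length x" "set as \<subseteq> carr N" using as by (auto simp: interp_def)
  have lb: "length bs = length y" "set bs \<subseteq> carr N" using bs by (auto simp: interp_def)
  have "val_upd (val x as) y bs v = val (x @ y) (as @ bs) v" if "v \<in> set x \<union> set y" for v
    using that
  proof
    assume v: "v \<in> set x"
    then have "v \<notin> set y" using disjoint_xy by blast
    then show ?thesis using val_upd_notin val_append_left[OF distinct_xy la(1) lb(1) v] by metis
  next
    assume "v \<in> set y"
    then obtain i where i: "i < length y" "v = y ! i" by (auto simp: in_set_conv_nth)
    then show ?thesis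
      using val_upd_nth[OF distinct_y, of bs i] val_append_nth_right[OF distinct_xy la(1) lb(1) i(1)] lb(1)
      by simp
  qed
  moreover have "sat N (val (x @ y) (as @ bs)) graph_fm"
    using sat_graph_fm[OF N la(1) lb(1) la(2) lb(2)] as g_N by simp
  ultimately have "sat N (val_upd (val x as) y bs) graph_fm"
    using FV_graph_fm sat_cong[of graph_fm "val_upd (val x as) y bs" "val (x @ y) (as @ bs)" N] by blast
  then have "sat N (val x as) (exs y graph_fm)" using sat_exs[OF distinct_y] lb by blast
  then show "as \<in> interp N x (exs y graph_fm)" using as by (simp add: interp_def)
qed

lemma valid_graph_fm_functional:
  "N \<in> MT af ar S T \<Longrightarrow>
    valid_in N (x @ y @ fresh_vars) (Conj graph_fm (subst graph_fm (ren y fresh_vars))) (eqs (zip y fresh_vars))"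
  unfolding valid_in_def
proof
  fix ws assume N: "N \<in> MT af ar S T"
    and ws: "ws \<in> interp N (x @ y @ fresh_vars) (Conj graph_fm (subst graph_fm (ren y fresh_vars)))"
  then have "ws \<in> interp N ((x @ y) @ fresh_vars) (Conj graph_fm (subst graph_fm (ren y fresh_vars)))"
    by simp
  then obtain abs cs where abc: "ws = abs @ cs" "length abs = length (x @ y)" "length cs = length fresh_vars"
    "set abs \<subseteq> carr N" "set cs \<subseteq> carr N"
    "sat N (val ((x @ y) @ fresh_vars) (abs @ cs)) (Conj graph_fm (subst graph_fm (ren y fresh_vars)))"
    by (rule interp_append_split)
  define as bs where "as = take (length x) abs" and "bs = drop (length x) abs"
  have ab: "abs = as @ bs" "length as = length x" "length bs = length y" "set as \<subseteq> carr N" "set bs \<subseteq> carr N"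
    using abc(2,4) set_take_subset set_drop_subset by (fastforce simp: as_def bs_def)+
  have lcs: "length cs = length y" using abc(3) fresh_vars(1) by simp
  let ?\<rho> = "val ((x @ y) @ fresh_vars) ((as @ bs) @ cs)"
  have d3: "distinct ((x @ y) @ fresh_vars)" using distinct_xy fresh_vars by auto
  have \<rho>_xy: "?\<rho> v = val (x @ y) (as @ bs) v" if "v \<in> set (x @ y)" for v
    using val_append_left[OF d3 abc(2,3) that] ab(1) by simp
  have "sat N ?\<rho> graph_fm" using abc(6) ab(1) by simp
  moreover have "sat N ?\<rho> graph_fm = sat N (val (x @ y) (as @ bs)) graph_fm"
    using FV_graph_fm \<rho>_xy by (intro sat_cong) auto
  ultimately have "sat N (val (x @ y) (as @ bs)) graph_fm" by simp
  then have g1: "g (N, as) = (N, bs)" using sat_graph_fm[OF N ab(2-5)] by simp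
  have "sat N (val (x @ y) (as @ cs)) graph_fm"
    using abc(6) ab(1) sat_subst_graph_fm_ren[OF ab(2,3) lcs] by simp
  then have "g (N, as) = (N, cs)" using sat_graph_fm[OF N ab(2) lcs ab(4) abc(5)] by simp
  then have bs_cs: "bs = cs" using g1 by simp
  have "?\<rho> (y ! i) = ?\<rho> (fresh_vars ! i)" if "i < length y" for i
  proof -
    have "?\<rho> (y ! i) = bs ! i"
      using \<rho>_xy[of "y ! i"] that val_append_nth_right[OF distinct_xy ab(2,3) that] by simp
    moreover have "?\<rho> (fresh_vars ! i) = cs ! i"
      using val_append_nth_right[OF d3 abc(2,3)] ab(1) that fresh_vars(1) by simp
    ultimately show ?thesis using bs_cs by simp
  qed
  then have "sat N ?\<rho> (eqs (zip y fresh_vars))"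
    unfolding sat_eqs using fresh_vars(1) by (auto simp: set_zip)
  then show "ws \<in> interp N (x @ y @ fresh_vars) (eqs (zip y fresh_vars))"
    using ws by (simp add: interp_def abc(1) ab(1))
qed

lemma induced_map_graph_fm: "e \<in> extn af ar S T x \<phi> \<Longrightarrow> g e = induced_map x y graph_fm e"
proof -
  assume "e \<in> extn af ar S T x \<phi>"
  then obtain N as where e: "e = (N, as)" "N \<in> MT af ar S T" "as \<in> interp N x \<phi>" by (auto simp: extn_def)
  obtain bs where g_N: "g (N, as) = (N, bs)" and bs: "bs \<in> interp N y \<psi>" using g_graph[OF e(2,3)] .
  have la: "length as = length x" "set as \<subseteq> carr N" using e(3) by (auto simp: interp_def)
  have "as @ bs' \<in> interp N (x @ y) graph_fm \<longleftrightarrow> bs' = bs" for bs'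
  proof
    assume "as @ bs' \<in> interp N (x @ y) graph_fm"
    then have "length bs' = length y" "set bs' \<subseteq> carr N" "sat N (val (x @ y) (as @ bs')) graph_fm"
      using la by (auto simp: interp_def)
    then show "bs' = bs" using sat_graph_fm[OF e(2) la(1) _ la(2)] g_N by simp
  next
    assume "bs' = bs"
    moreover have "length bs = length y" "set bs \<subseteq> carr N" using bs by (auto simp: interp_def)
    ultimately show "as @ bs' \<in> interp N (x @ y) graph_fm"
      using sat_graph_fm[OF e(2) la(1) _ la(2)] e(3) g_N la by (simp add: interp_def)
  qed
  then show ?thesis using e(1) g_N by (simp add: induced_map_def)
qed

lemma prov_functional_graph_fm:
  assumes "enough_models af ar S T"
  shows "prov_functional af ar T x \<phi> y \<psi> graph_fm"
proof -
  have prv_of_valid: "prv af ar T xs \<alpha> \<beta>" if "seq_ok af ar xs \<alpha> \<beta>" "\<And>N. N \<in> MT af ar S T \<Longrightarrow> valid_in N xs \<alpha> \<beta>"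
    for xs \<alpha> \<beta>
    using assms that unfolding enough_models_def by blast
  note FV_subst_graph_fm_ren
  moreover have "FV (eqs (zip y fresh_vars) :: ('f, 'r, 'd) fm) \<subseteq> set y \<union> set fresh_vars"
    by (auto simp: FV_eqs elim!: in_set_zipE)
  moreover have "distinct (x @ y @ fresh_vars)" using distinct_xy fresh_vars by auto
  moreover have "wff af ar (subst graph_fm (ren y fresh_vars))"
    using wff_subst[OF wff_graph_fm] wft_ren by blast
  ultimately have "prv af ar T (x @ y @ fresh_vars) (Conj graph_fm (subst graph_fm (ren y fresh_vars)))
      (eqs (zip y fresh_vars))"
    using wff_graph_fm FV_graph_fm wff_eqs
    by (intro prv_of_valid valid_graph_fm_functional) (auto simp: seq_ok_def)
  moreover have "prv af ar T (x @ y) graph_fm (Conj \<phi> \<psi>)"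
    using distinct_xy wff_graph_fm wff_\<phi> wff_\<psi> FV_graph_fm FV_\<phi> FV_\<psi>
    by (intro prv_of_valid valid_graph_fm_dom_cod) (auto simp: seq_ok_def)
  moreover have "prv af ar T x \<phi> (exs y graph_fm)"
    using distinct_x wff_graph_fm wff_\<phi> FV_graph_fm FV_\<phi>
    by (intro prv_of_valid valid_graph_fm_total) (auto simp: seq_ok_def wff_exs FV_exs)
  ultimately show ?thesis
    using wff_graph_fm FV_graph_fm fresh_vars freefor_graph_fm_ren
    unfolding prov_functional_def by (intro conjI exI[of _ fresh_vars]) auto
qed

end

theorem corollary3p13:
  fixes af :: "'f \<Rightarrow> nat" and ar :: "'r \<Rightarrow> nat" and S :: "'s set"
    and \<kappa> :: "'k rel"
    and T :: "(nat list \<times> ('f, 'r, 'd) fm \<times> ('f, 'r, 'd) fm) set"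
    and x y :: "nat list" and \<phi> \<psi> :: "('f, 'r, 'd) fm"
    and g :: "('f, 'r, 's) str \<times> 's set list \<Rightarrow> ('f, 'r, 's) str \<times> 's set list"
  assumes "Card_order \<kappa>" and "(natLeq, \<kappa>) \<in> ordLeq"
    and "(card_of (UNIV :: ('f + 'r) set), \<kappa>) \<in> ordLeq"
    and "(\<kappa>, card_of S) \<in> ordLeq"
    and "(card_of S, card_of (UNIV :: 'd set)) \<in> ordLeq"
    and "geometric_theory af ar T"
    and "enough_models af ar S T"
    and "distinct x" and "distinct y" and "set x \<inter> set y = {}"
    and "wff af ar \<phi>" and "FV \<phi> \<subseteq> set x"
    and "wff af ar \<psi>" and "FV \<psi> \<subseteq> set y"
    and "eqsh_mor af ar S T x \<phi> y \<psi> g"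
  shows "\<exists>\<theta>. prov_functional af ar T x \<phi> y \<psi> \<theta> \<and>
           (\<forall>e\<in>extn af ar S T x \<phi>. g e = induced_map x y \<theta> e)"
proof -
  have card_symbols: "|UNIV :: ('f + 'r) set| \<le>o |S|" using assms(3,4) by (rule ordLeq_transitive)
  have "|UNIV :: 'f set| \<le>o |UNIV :: ('f + 'r) set|" "|UNIV :: 'r set| \<le>o |UNIV :: ('f + 'r) set|"
    using card_of_ordLeq[of "UNIV :: 'f set" "UNIV :: ('f + 'r) set"]
      card_of_ordLeq[of "UNIV :: 'r set" "UNIV :: ('f + 'r) set"] inj_Inl inj_Inr by blast+
  then have "|UNIV :: 'f set| \<le>o |S|" "|UNIV :: 'r set| \<le>o |S|"
    using card_symbols by (blast intro: ordLeq_transitive)+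
  moreover have "infinite S"
    using ordLeq_transitive[OF assms(2,4)] infinite_iff_natLeq_ordLeq by blast
  ultimately interpret small_eqsh_morphism af ar S T x y \<phi> \<psi> g
    using assms(5,8-15) by unfold_locales blast+
  show ?thesis using prov_functional_graph_fm[OF assms(7)] induced_map_graph_fm by blast
qed

end
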